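(* Let $\mathfrak{B}$ be a finite cyclic group, of order at least $3$, of invertible diagonal $2\times 2$ complex matrices, containing three pairwise linearly independent matrices. Let $n\ge 3$ and let $F$ be a Boolean function of arity $2n$. Suppose (binary closure condition) every function of arity less than $2n$ that is realizable by a gadget of the problem $\#(\{F\}\cup\mathfrak{B})$ lies in $\lambda\langle\mathfrak{B}\rangle$. Then $F$ also lies in $\lambda\langle\mathfrak{B}\rangle$.
   Context: Matrices $M\in\mathfrak{B}$ are regarded as binary functions $M(u,v)=M_{uv}$. The problem $\#\mathcal{G}$ takes a finite multigraph with each vertex carrying a function from $\mathcal{G}$ of arity equal to its degree (edges act as binary equality) and outputs the sum over $\{0,1\}$-assignments to edges of the product of vertex functions; a gadget is such a network with dangling edges and its function is obtained by fixing the dangling-edge values; a function is realizable if it is the function of a gadget. $\langle\mathfrak{B}\rangle$ is the set of functions of even arity $2m$ of the form $x\mapsto\prod_{j=1}^m M_j(x_{\pi(2j-1)},x_{\pi(2j)})$ for a permutation $\pi$ of the variables and $M_1,\dots,M_m\in\mathfrak{B}$; $\lambda\langle\mathfrak{B}\rangle=\{\lambda f:\lambda\in\mathbb{C}, f\in\langle\mathfrak{B}\rangle\}$ (so it contains the zero function). *)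

theory Defs
  imports "HOL-Library.FuncSet" Complex_Main
begin

text \<open>Boolean domain {0,1} is rendered as bool (0 = False, 1 = True).
  A 2x2 complex matrix M is a function bool => bool => complex, M u v = M_{uv};
  viewed as the binary function (u,v) |-> M u v.
  A signature (function) is a pair (arity k, f) where f :: bool list => complex
  is only relevant on lists of length k.\<close>

type_synonym mat2 = "bool \<Rightarrow> bool \<Rightarrow> complex"
type_synonym sig = "nat \<times> (bool list \<Rightarrow> complex)"

definition mmul :: "mat2 \<Rightarrow> mat2 \<Rightarrow> mat2" where
  "mmul A B = (\<lambda>u v. A u False * B False v + A u True * B True v)"

definition mone :: mat2 where
  "mone = (\<lambda>u v. if u = v then 1 else 0)"

primrec mpow :: "mat2 \<Rightarrow> nat \<Rightarrow> mat2" where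
  "mpow M 0 = mone"
| "mpow M (Suc k) = mmul M (mpow M k)"

definition is_diagonal :: "mat2 \<Rightarrow> bool" where
  "is_diagonal M \<longleftrightarrow> M False True = 0 \<and> M True False = 0"

definition is_invertible :: "mat2 \<Rightarrow> bool" where
  "is_invertible M \<longleftrightarrow> M False False * M True True - M False True * M True False \<noteq> 0"

definition lin_indep2 :: "mat2 \<Rightarrow> mat2 \<Rightarrow> bool" where
  "lin_indep2 A B \<longleftrightarrow> (\<forall>a b::complex. (\<forall>u v. a * A u v + b * B u v = 0) \<longrightarrow> a = 0 \<and> b = 0)"

definition finite_cyclic_diag_group :: "mat2 set \<Rightarrow> bool" where
  "finite_cyclic_diag_group B \<longleftrightarrow>
     finite B \<and> (\<forall>M\<in>B. is_diagonal M \<and> is_invertible M) \<and>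
     mone \<in> B \<and> (\<forall>M\<in>B. \<forall>N\<in>B. mmul M N \<in> B) \<and>
     (\<forall>M\<in>B. \<exists>N\<in>B. mmul M N = mone \<and> mmul N M = mone) \<and>
     (\<exists>g\<in>B. B = {mpow g k | k. True})"

definition mat_sig :: "mat2 \<Rightarrow> sig" where
  "mat_sig M = (2, \<lambda>x. M (x ! 0) (x ! 1))"

text \<open>Gadgets: vertices 0..<length gfs, vertex v carries signature gfs!v = (d_v, f_v) with
  ports (v,0),...,(v,d_v - 1) (the edge at port i is the i-th input of f_v).
  gdang lists the dangling edges (by the port they are attached to; their order gives the
  variable order of the realized function); gpair is a fixed-point-free involution on the
  remaining ports describing the (multi)edges, including self-loops.\<close>
record gadget =
  gfs :: "sig list"
  gdang :: "(nat \<times> nat) list"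
  gpair :: "nat \<times> nat \<Rightarrow> nat \<times> nat"

definition ports :: "gadget \<Rightarrow> (nat \<times> nat) set" where
  "ports G = {(v, i). v < length (gfs G) \<and> i < fst (gfs G ! v)}"

definition wf_gadget :: "sig set \<Rightarrow> gadget \<Rightarrow> bool" where
  "wf_gadget \<G> G \<longleftrightarrow>
     set (gfs G) \<subseteq> \<G> \<and> distinct (gdang G) \<and> set (gdang G) \<subseteq> ports G \<and>
     (\<forall>q \<in> ports G - set (gdang G).
        gpair G q \<in> ports G - set (gdang G) \<and> gpair G q \<noteq> q \<and> gpair G (gpair G q) = q)"

text \<open>Value of the gadget at input x: sum over {0,1}-assignments to all edges (equivalently to
  ports, consistently along internal edges, with dangling edges fixed to x) of the product of
  the vertex functions.\<close>
definition gval :: "gadget \<Rightarrow> bool list \<Rightarrow> complex" where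
  "gval G x =
     (\<Sum>\<sigma> \<in> {\<sigma> \<in> ports G \<rightarrow>\<^sub>E (UNIV :: bool set).
               (\<forall>j < length (gdang G). \<sigma> (gdang G ! j) = x ! j) \<and>
               (\<forall>q \<in> ports G - set (gdang G). \<sigma> q = \<sigma> (gpair G q))}.
        \<Prod>v < length (gfs G). snd (gfs G ! v) (map (\<lambda>i. \<sigma> (v, i)) [0..<fst (gfs G ! v)]))"

definition realizable :: "sig set \<Rightarrow> nat \<Rightarrow> (bool list \<Rightarrow> complex) \<Rightarrow> bool" where
  "realizable \<G> k f \<longleftrightarrow>
     (\<exists>G. wf_gadget \<G> G \<and> length (gdang G) = k \<and> (\<forall>x. length x = k \<longrightarrow> f x = gval G x))"

definition in_lambda_span :: "mat2 set \<Rightarrow> nat \<Rightarrow> (bool list \<Rightarrow> complex) \<Rightarrow> bool" where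
  "in_lambda_span B k f \<longleftrightarrow> even k \<and>
     (\<exists>(c::complex) (\<pi>::nat \<Rightarrow> nat) Ms. bij_betw \<pi> {..<k} {..<k} \<and>
        length Ms = k div 2 \<and> set Ms \<subseteq> B \<and>
        (\<forall>x. length x = k \<longrightarrow>
           f x = c * (\<Prod>j < k div 2. (Ms ! j) (x ! \<pi> (2*j)) (x ! \<pi> (2*j+1)))))"

end

theory Submission
  imports Defs
begin

text \<open>For diagonal \<open>B\<close>, a function lies in \<open>\<lambda>\<langle>B\<rangle>\<close> iff it is a paired product: it vanishes
  off the assignments that are constant on the blocks of a perfect matching of its variables,
  and on them it is a scalar times a product of diagonals of \<open>B\<close>, one per block. Joining the
  inputs \<open>i\<close> and \<open>j\<close> of \<open>F\<close> by an edge carrying \<open>M \<in> B\<close> realizes the contraction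
  \<open>\<Sum>\<^sub>a M\<^sub>a\<^sub>a F(\<dots>a\<dots>a\<dots>)\<close> of arity \<open>2n - 2\<close>, so by hypothesis all these contractions are
  paired products. Three pairwise independent diagonals \<open>w\<^sub>1, w\<^sub>2, w\<^sub>3\<close> determine, at any
  \<open>i \<noteq> j\<close> on which a support point of \<open>F\<close> agrees, a matching of all \<open>2n\<close> variables
  compatible with the support of \<open>F\<close>; a switching argument produces a matching that is stable
  under re-pairing at each of its blocks, and this confines the support of \<open>F\<close> to the
  assignments constant on its blocks. There \<open>F\<close> is a function of one Boolean per block all of
  whose contractions factorize, and a rank argument with the three \<open>w\<^sub>k\<close> shows that \<open>F\<close> itself
  factorizes.\<close>

lemma ex_not_in_smaller_card:
  assumes "finite B" "card B < card A"
  shows "\<exists>x\<in>A. x \<notin> B"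
  using assms card_mono by (metis not_le subsetI)

lemma bool_pigeonhole:
  assumes "3 \<le> N"
  shows "\<exists>i j. i < N \<and> j < N \<and> i \<noteq> j \<and> (x::nat \<Rightarrow> bool) i = x j"
proof -
  consider "x 0 = x 1" | "x 0 = x 2" | "x 1 = x 2" by auto
  then show ?thesis
  proof cases
    case 1 then show ?thesis using assms by (intro exI[of _ 0] exI[of _ 1]) auto
  next
    case 2 then show ?thesis using assms by (intro exI[of _ 0] exI[of _ 2]) auto
  next
    case 3 then show ?thesis using assms by (intro exI[of _ 1] exI[of _ 2]) auto
  qed
qed

section \<open>Linear algebra on \<open>bool \<Rightarrow> complex\<close>\<close>

definition dot :: "(bool \<Rightarrow> complex) \<Rightarrow> (bool \<Rightarrow> complex) \<Rightarrow> complex" where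
  "dot w v = w False * v False + w True * v True"

definition det2 :: "(bool \<Rightarrow> complex) \<Rightarrow> (bool \<Rightarrow> complex) \<Rightarrow> complex" where
  "det2 a b = a False * b True - a True * b False"

lemma det2_mult_False: "det2 a b * u False = b True * dot a u - a True * dot b u"
  unfolding dot_def det2_def by (simp add: algebra_simps)

lemma det2_mult_True: "det2 a b * u True = a False * dot b u - b False * dot a u"
  unfolding dot_def det2_def by (simp add: algebra_simps)

lemma det2_commute: "det2 b a = - det2 a b"
  unfolding det2_def by (simp add: algebra_simps)

lemma det2_eq_0_swap: "det2 u v = 0 \<Longrightarrow> u x * v y = u y * v x"
  unfolding det2_def by (cases x; cases y) (auto simp: algebra_simps)

lemma dot_mult_dot_diff: "dot w1 a * dot w2 b - dot w1 b * dot w2 a = det2 w1 w2 * det2 a b"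
  unfolding dot_def det2_def by (simp add: algebra_simps)

lemma dot_eq_0_imp_eq_0:
  assumes "det2 a b \<noteq> 0" "dot a u = 0" "dot b u = 0"
  shows "u x = 0"
  using det2_mult_False[of a b u] det2_mult_True[of a b u] assms by (cases x) auto

lemma dot_eq_0_pigeonhole:
  assumes "det2 w1 w2 \<noteq> 0" "det2 w1 w3 \<noteq> 0" "det2 w2 w3 \<noteq> 0"
    and "\<And>w. w \<in> {w1, w2, w3} \<Longrightarrow> dot w u = 0 \<or> dot w v = 0"
  shows "u x = 0 \<or> v y = 0"
  using assms(4)[of w1] assms(4)[of w2] assms(4)[of w3]
    dot_eq_0_imp_eq_0[OF assms(1), of u x] dot_eq_0_imp_eq_0[OF assms(2), of u x]
    dot_eq_0_imp_eq_0[OF assms(3), of u x] dot_eq_0_imp_eq_0[OF assms(1), of v y]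
    dot_eq_0_imp_eq_0[OF assms(2), of v y] dot_eq_0_imp_eq_0[OF assms(3), of v y]
  by auto

lemma dot_linear_combination:
  assumes "det2 a b \<noteq> 0" "det2 a c \<noteq> 0" "det2 b c \<noteq> 0"
  shows "\<exists>\<alpha> \<beta>. \<alpha> \<noteq> 0 \<and> \<beta> \<noteq> 0 \<and> (\<forall>v. dot c v = \<alpha> * dot a v + \<beta> * dot b v)"
proof -
  define \<alpha> where "\<alpha> = det2 c b / det2 a b"
  define \<beta> where "\<beta> = det2 a c / det2 a b"
  have "\<alpha> \<noteq> 0" unfolding \<alpha>_def using assms det2_commute[of b c] by simp
  moreover have "\<beta> \<noteq> 0" unfolding \<beta>_def using assms by simp
  moreover have "c x = \<alpha> * a x + \<beta> * b x" for x
  proof -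
    have "det2 a b * c x = det2 c b * a x + det2 a c * b x"
      unfolding det2_def by (cases x) (simp_all add: algebra_simps)
    then show ?thesis using assms(1) unfolding \<alpha>_def \<beta>_def by (simp add: field_simps)
  qed
  ultimately show ?thesis by (intro exI[of _ \<alpha>] exI[of _ \<beta>]) (auto simp: dot_def algebra_simps)
qed

section \<open>Factorization from factorizing contractions\<close>

lemma prod_fun_upd_False:
  assumes "finite A" "s \<in> A"
  shows "(\<Prod>q\<in>A. \<phi> q (((\<lambda>_. False)(s := e)) q)) = \<phi> s e * (\<Prod>q\<in>A - {s}. \<phi> q False)"
proof -
  have "(\<Prod>q\<in>A - {s}. \<phi> q (((\<lambda>_. False)(s := e)) q)) = (\<Prod>q\<in>A - {s}. \<phi> q False)"
    by (rule prod.cong) auto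
  then show ?thesis using assms by (simp add: prod.remove)
qed

lemma prod_fun_upd2_False:
  assumes "finite A" "s \<in> A" "r \<in> A" "s \<noteq> r"
  shows "(\<Prod>q\<in>A. \<phi> q (((\<lambda>_. False)(s := e, r := c)) q))
    = \<phi> s e * \<phi> r c * (\<Prod>q\<in>A - {s} - {r}. \<phi> q False)"
proof -
  let ?f = "\<lambda>q. \<phi> q (((\<lambda>_. False)(s := e, r := c)) q)"
  have "prod ?f A = \<phi> s e * (\<phi> r c * prod ?f (A - {s} - {r}))"
    using assms by (subst prod.remove[of A s], simp_all, subst prod.remove[of "A - {s}" r], auto)
  also have "prod ?f (A - {s} - {r}) = (\<Prod>q\<in>A - {s} - {r}. \<phi> q False)"
    by (rule prod.cong) auto
  finally show ?thesis by (simp only: mult.assoc)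
qed

definition factorizes :: "(bool \<Rightarrow> complex) set \<Rightarrow> 'a set \<Rightarrow> (('a \<Rightarrow> bool) \<Rightarrow> complex) \<Rightarrow> bool" where
  "factorizes D A g \<longleftrightarrow> (\<exists>c \<phi>. (\<forall>s. \<phi> s \<in> D) \<and> (\<forall>b. g b = c * (\<Prod>s\<in>A. \<phi> s (b s))))"

locale factorizing_contractions =
  fixes A :: "'a set" and D :: "(bool \<Rightarrow> complex) set"
    and w1 w2 w3 :: "bool \<Rightarrow> complex" and h :: "('a \<Rightarrow> bool) \<Rightarrow> complex"
  assumes finite_A: "finite A" and card_A: "3 \<le> card A"
    and D_nonzero: "\<And>d a. d \<in> D \<Longrightarrow> d a \<noteq> 0"
    and d12: "det2 w1 w2 \<noteq> 0" and d13: "det2 w1 w3 \<noteq> 0" and d23: "det2 w2 w3 \<noteq> 0"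
    and contractions: "\<And>t w. t \<in> A \<Longrightarrow> w \<in> {w1, w2, w3} \<Longrightarrow>
      factorizes D (A - {t}) (\<lambda>b. dot w (\<lambda>a. h (b(t := a))))"
begin

text \<open>Holding all coordinates except \<open>t, s, r\<close> at \<open>False\<close>, the \<open>w\<close>-contraction at \<open>r\<close> is a
  rank-one \<open>2\<times>2\<close> matrix in \<open>(b t, b s)\<close>. Solving for the slice at \<open>t\<close> by Cramer's rule writes it
  as a sum of two rank-one matrices, whose determinant is a multiple of \<open>det2 (\<phi>1 s) (\<phi>2 s)\<close>.\<close>
lemma contraction_factors_orthogonal:
  assumes t: "t \<in> A" and s: "s \<in> A" "s \<noteq> t"
    and \<phi>1: "\<forall>s. \<phi>1 s \<in> D"
    and g1: "\<And>b. dot w1 (\<lambda>a. h (b(t := a))) = c1 * (\<Prod>s\<in>A - {t}. \<phi>1 s (b s))"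
    and \<phi>2: "\<forall>s. \<phi>2 s \<in> D"
    and g2: "\<And>b. dot w2 (\<lambda>a. h (b(t := a))) = c2 * (\<Prod>s\<in>A - {t}. \<phi>2 s (b s))"
    and c1: "c1 \<noteq> 0" and c2: "c2 \<noteq> 0"
    and r: "r \<in> A" "r \<noteq> t" "r \<noteq> s" and det_s: "det2 (\<phi>1 s) (\<phi>2 s) \<noteq> 0"
    and w: "w \<in> {w1, w2, w3}"
  shows "dot w (\<phi>1 r) = 0 \<or> dot w (\<phi>2 r) = 0"
proof -
  define Z where "Z = (\<lambda>_::'a. False)"
  define \<delta> where "\<delta> = det2 w1 w2"
  define \<pi>1 where "\<pi>1 = (\<Prod>q\<in>A - {t} - {s} - {r}. \<phi>1 q False)"
  define \<pi>2 where "\<pi>2 = (\<Prod>q\<in>A - {t} - {s} - {r}. \<phi>2 q False)"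
  have \<pi>1: "\<pi>1 \<noteq> 0" unfolding \<pi>1_def using finite_A \<phi>1 D_nonzero by (simp add: prod_zero_iff)
  have \<pi>2: "\<pi>2 \<noteq> 0" unfolding \<pi>2_def using finite_A \<phi>2 D_nonzero by (simp add: prod_zero_iff)
  have slice1: "dot w1 (\<lambda>a. h ((Z(s := e, r := c))(t := a))) = c1 * (\<phi>1 s e * \<phi>1 r c * \<pi>1)" for e c
    unfolding g1 \<pi>1_def Z_def using finite_A s r t by (subst prod_fun_upd2_False) auto
  have slice2: "dot w2 (\<lambda>a. h ((Z(s := e, r := c))(t := a))) = c2 * (\<phi>2 s e * \<phi>2 r c * \<pi>2)" for e c
    unfolding g2 \<pi>2_def Z_def using finite_A s r t by (subst prod_fun_upd2_False) auto
  have cramer_False: "\<delta> * h ((Z(s := e, r := c))(t := False))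
      = w2 True * (c1 * (\<phi>1 s e * \<phi>1 r c * \<pi>1)) - w1 True * (c2 * (\<phi>2 s e * \<phi>2 r c * \<pi>2))" for e c
    using det2_mult_False[of w1 w2 "\<lambda>a. h ((Z(s := e, r := c))(t := a))"] slice1 slice2
    unfolding \<delta>_def by simp
  have cramer_True: "\<delta> * h ((Z(s := e, r := c))(t := True))
      = w1 False * (c2 * (\<phi>2 s e * \<phi>2 r c * \<pi>2)) - w2 False * (c1 * (\<phi>1 s e * \<phi>1 r c * \<pi>1))" for e c
    using det2_mult_True[of w1 w2 "\<lambda>a. h ((Z(s := e, r := c))(t := a))"] slice1 slice2
    unfolding \<delta>_def by simp
  have upd_commute: "(Z(t := a, s := e))(r := c) = (Z(s := e, r := c))(t := a)" for a e c
    using r s by (auto simp: fun_eq_iff)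
  obtain c' \<psi> where
    hr: "\<And>b. dot w (\<lambda>c. h (b(r := c))) = c' * (\<Prod>q\<in>A - {r}. \<psi> q (b q))"
    using contractions[OF r(1) w] unfolding factorizes_def by blast
  define C where "C a e = dot w (\<lambda>c. h ((Z(t := a, s := e))(r := c)))" for a e
  have C_product: "C a e = c' * (\<psi> t a * \<psi> s e * (\<Prod>q\<in>A - {r} - {t} - {s}. \<psi> q False))" for a e
    unfolding C_def hr Z_def using finite_A s r t by (subst prod_fun_upd2_False) auto
  define \<beta>1 where "\<beta>1 = c1 * \<pi>1 * dot w (\<phi>1 r)"
  define \<beta>2 where "\<beta>2 = c2 * \<pi>2 * dot w (\<phi>2 r)"
  have C_False: "\<delta> * C False e = w2 True * \<beta>1 * \<phi>1 s e - w1 True * \<beta>2 * \<phi>2 s e" for e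
  proof -
    have "\<delta> * C False e = w False * (\<delta> * h ((Z(s := e, r := False))(t := False)))
        + w True * (\<delta> * h ((Z(s := e, r := True))(t := False)))"
      unfolding C_def upd_commute dot_def by (simp add: algebra_simps)
    then show ?thesis unfolding cramer_False \<beta>1_def \<beta>2_def dot_def by (simp add: algebra_simps)
  qed
  have C_True: "\<delta> * C True e = w1 False * \<beta>2 * \<phi>2 s e - w2 False * \<beta>1 * \<phi>1 s e" for e
  proof -
    have "\<delta> * C True e = w False * (\<delta> * h ((Z(s := e, r := False))(t := True)))
        + w True * (\<delta> * h ((Z(s := e, r := True))(t := True)))"
      unfolding C_def upd_commute dot_def by (simp add: algebra_simps)
    then show ?thesis unfolding cramer_True \<beta>1_def \<beta>2_def dot_def by (simp add: algebra_simps)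
  qed
  have "(\<delta> * C False False) * (\<delta> * C True True) - (\<delta> * C False True) * (\<delta> * C True False)
      = \<delta> * \<beta>1 * \<beta>2 * det2 (\<phi>1 s) (\<phi>2 s)"
    by (simp only: C_False C_True) (simp add: \<delta>_def det2_def algebra_simps)
  moreover have "C False False * C True True = C False True * C True False"
    unfolding C_product by (simp add: algebra_simps)
  ultimately have "\<delta> * \<beta>1 * \<beta>2 * det2 (\<phi>1 s) (\<phi>2 s) = 0" by (simp add: algebra_simps)
  then show ?thesis using det_s d12 c1 c2 \<pi>1 \<pi>2 unfolding \<delta>_def \<beta>1_def \<beta>2_def by simp
qed

text \<open>Otherwise, for each of three pairwise independent \<open>w\<close> one of the nowhere vanishing
  vectors \<open>\<phi>1 r\<close>, \<open>\<phi>2 r\<close> would be orthogonal to \<open>w\<close>.\<close>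
lemma contraction_factors_parallel:
  assumes t: "t \<in> A" and s: "s \<in> A" "s \<noteq> t"
    and \<phi>1: "\<forall>s. \<phi>1 s \<in> D"
    and g1: "\<And>b. dot w1 (\<lambda>a. h (b(t := a))) = c1 * (\<Prod>s\<in>A - {t}. \<phi>1 s (b s))"
    and \<phi>2: "\<forall>s. \<phi>2 s \<in> D"
    and g2: "\<And>b. dot w2 (\<lambda>a. h (b(t := a))) = c2 * (\<Prod>s\<in>A - {t}. \<phi>2 s (b s))"
    and c1: "c1 \<noteq> 0" and c2: "c2 \<noteq> 0"
  shows "det2 (\<phi>1 s) (\<phi>2 s) = 0"
proof (rule ccontr)
  assume det_s: "det2 (\<phi>1 s) (\<phi>2 s) \<noteq> 0"
  have "card {t, s} < card A" using card_A by (simp add: card_insert_if)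
  then obtain r where r: "r \<in> A" "r \<noteq> t" "r \<noteq> s" using ex_not_in_smaller_card[of "{t, s}" A] by auto
  have "dot w (\<phi>1 r) = 0 \<or> dot w (\<phi>2 r) = 0" if "w \<in> {w1, w2, w3}" for w
    by (rule contraction_factors_orthogonal[OF t s \<phi>1 g1 \<phi>2 g2 c1 c2 r det_s that])
  then have "\<phi>1 r False = 0 \<or> \<phi>2 r False = 0"
    using dot_eq_0_pigeonhole[OF d12 d13 d23] by blast
  then show False using \<phi>1 \<phi>2 D_nonzero by auto
qed

lemma slices_parallel:
  assumes t: "t \<in> A"
  shows "det2 (\<lambda>a. h (b(t := a))) (\<lambda>a. h (b'(t := a))) = 0"
proof -
  obtain c1 \<phi>1 where \<phi>1: "\<forall>s. \<phi>1 s \<in> D"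
    and g1: "\<And>b. dot w1 (\<lambda>a. h (b(t := a))) = c1 * (\<Prod>s\<in>A - {t}. \<phi>1 s (b s))"
    using contractions[OF t, of w1] unfolding factorizes_def by blast
  obtain c2 \<phi>2 where \<phi>2: "\<forall>s. \<phi>2 s \<in> D"
    and g2: "\<And>b. dot w2 (\<lambda>a. h (b(t := a))) = c2 * (\<Prod>s\<in>A - {t}. \<phi>2 s (b s))"
    using contractions[OF t, of w2] unfolding factorizes_def by blast
  have "dot w1 (\<lambda>a. h (b(t := a))) * dot w2 (\<lambda>a. h (b'(t := a)))
      = dot w1 (\<lambda>a. h (b'(t := a))) * dot w2 (\<lambda>a. h (b(t := a)))"
  proof (cases "c1 = 0 \<or> c2 = 0")
    case True
    then show ?thesis unfolding g1 g2 by auto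
  next
    case False
    have parallel: "det2 (\<phi>1 s) (\<phi>2 s) = 0" if "s \<in> A - {t}" for s
      using contraction_factors_parallel[OF t _ _ \<phi>1 g1 \<phi>2 g2]
        False that by blast
    have "(\<Prod>s\<in>A - {t}. \<phi>1 s (b s)) * (\<Prod>s\<in>A - {t}. \<phi>2 s (b' s))
        = (\<Prod>s\<in>A - {t}. \<phi>1 s (b s) * \<phi>2 s (b' s))"
      by (simp add: prod.distrib)
    also have "\<dots> = (\<Prod>s\<in>A - {t}. \<phi>1 s (b' s) * \<phi>2 s (b s))"
      by (rule prod.cong) (auto intro: det2_eq_0_swap parallel)
    also have "\<dots> = (\<Prod>s\<in>A - {t}. \<phi>1 s (b' s)) * (\<Prod>s\<in>A - {t}. \<phi>2 s (b s))"
      by (simp add: prod.distrib)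
    finally show ?thesis unfolding g1 g2 by (simp add: algebra_simps)
  qed
  then show ?thesis
    using dot_mult_dot_diff[of w1 "\<lambda>a. h (b(t := a))" w2 "\<lambda>a. h (b'(t := a))"] d12 by simp
qed

lemma factorizes_but_one_factor:
  assumes t: "t \<in> A" and b0: "h b0 \<noteq> 0"
  shows "\<exists>u \<phi>. (\<forall>s. \<phi> s \<in> D) \<and> (\<forall>b. h b = u (b t) * (\<Prod>s\<in>A - {t}. \<phi> s (b s)))"
proof -
  define u where "u = (\<lambda>a. h (b0(t := a)))"
  have "u (b0 t) \<noteq> 0" unfolding u_def using b0 by simp
  then obtain w where w: "w \<in> {w1, w2}" "dot w u \<noteq> 0"
    using dot_eq_0_imp_eq_0[OF d12, of u "b0 t"] by blast
  obtain c \<phi> where \<phi>: "\<forall>s. \<phi> s \<in> D"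
    and g: "\<And>b. dot w (\<lambda>a. h (b(t := a))) = c * (\<Prod>s\<in>A - {t}. \<phi> s (b s))"
    using contractions[OF t, of w] w(1) unfolding factorizes_def by blast
  have "h b = (c / dot w u * u (b t)) * (\<Prod>s\<in>A - {t}. \<phi> s (b s))" for b
  proof -
    have swap: "h (b(t := x)) * u y = h (b(t := y)) * u x" for x y
      using det2_eq_0_swap[OF slices_parallel[OF t,
            of b b0]] unfolding u_def .
    have "h b * dot w u = w False * (h (b(t := b t)) * u False) + w True * (h (b(t := b t)) * u True)"
      unfolding dot_def by (simp add: algebra_simps)
    also have "\<dots> = w False * (h (b(t := False)) * u (b t)) + w True * (h (b(t := True)) * u (b t))"
      by (simp only: swap)
    also have "\<dots> = u (b t) * dot w (\<lambda>a. h (b(t := a)))"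
      unfolding dot_def by (simp add: algebra_simps)
    finally have "h b * dot w u = u (b t) * dot w (\<lambda>a. h (b(t := a)))" .
    then show ?thesis using g w(2) by (simp add: field_simps)
  qed
  then show ?thesis using \<phi> by (intro exI[of _ "\<lambda>a. c / dot w u * u a"] exI[of _ \<phi>]) simp
qed

lemma factorizes_if_one_free_factor:
  assumes t: "t \<in> A" and r: "r \<in> A" "r \<noteq> t"
    and \<phi>: "\<forall>s. \<phi> s \<in> D" and h_eq: "\<And>b. h b = u (b t) * (\<Prod>s\<in>A - {t}. \<phi> s (b s))"
  shows "factorizes D A h"
proof -
  obtain w where w: "w \<in> {w1, w2}" "dot w (\<phi> r) \<noteq> 0"
    using dot_eq_0_imp_eq_0[OF d12, of "\<phi> r" False] D_nonzero \<phi> by blast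
  obtain c \<psi> where \<psi>: "\<forall>s. \<psi> s \<in> D"
    and g: "\<And>b. dot w (\<lambda>a. h (b(r := a))) = c * (\<Prod>s\<in>A - {r}. \<psi> s (b s))"
    using contractions[OF r(1), of w] w(1) unfolding factorizes_def by blast
  define K1 where "K1 = (\<Prod>q\<in>A - {t} - {r}. \<phi> q False)"
  define K2 where "K2 = (\<Prod>q\<in>A - {r} - {t}. \<psi> q False)"
  define \<kappa> where "\<kappa> = c * K2 / (dot w (\<phi> r) * K1)"
  have K1: "K1 \<noteq> 0" unfolding K1_def using finite_A \<phi> D_nonzero by (simp add: prod_zero_iff)
  have u: "u a = \<kappa> * \<psi> t a" for a
  proof -
    let ?b = "(\<lambda>_. False)(t := a)"
    have "h (?b(r := x)) = u a * (\<phi> r x * K1)" for x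
    proof -
      have "(\<Prod>s\<in>A - {t}. \<phi> s ((?b(r := x)) s)) = (\<Prod>s\<in>A - {t}. \<phi> s (((\<lambda>_. False)(r := x)) s))"
        by (rule prod.cong) auto
      also have "\<dots> = \<phi> r x * K1" unfolding K1_def using finite_A r by (subst prod_fun_upd_False) auto
      finally show ?thesis using h_eq[of "?b(r := x)"] r by simp
    qed
    then have "dot w (\<lambda>x. h (?b(r := x))) = u a * dot w (\<phi> r) * K1"
      unfolding dot_def by (simp add: algebra_simps)
    moreover have "(\<Prod>s\<in>A - {r}. \<psi> s (?b s)) = \<psi> t a * K2"
      unfolding K2_def using finite_A r t by (subst prod_fun_upd_False) auto
    ultimately show ?thesis using g[of ?b] w(2) K1 unfolding \<kappa>_def by (simp add: field_simps)
  qed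
  have "h b = \<kappa> * (\<Prod>s\<in>A. (\<phi>(t := \<psi> t)) s (b s))" for b
  proof -
    have "(\<Prod>s\<in>A - {t}. (\<phi>(t := \<psi> t)) s (b s)) = (\<Prod>s\<in>A - {t}. \<phi> s (b s))"
      by (rule prod.cong) auto
    then show ?thesis using finite_A t by (simp add: prod.remove h_eq u)
  qed
  moreover have "\<forall>s. (\<phi>(t := \<psi> t)) s \<in> D" using \<phi> \<psi> by simp
  ultimately show ?thesis unfolding factorizes_def by blast
qed

theorem h_factorizes:
  assumes "D \<noteq> {}"
  shows "factorizes D A h"
proof (cases "\<exists>b. h b \<noteq> 0")
  case False
  obtain d where "d \<in> D" using assms by blast
  then show ?thesis using False unfolding factorizes_def by (intro exI[of _ 0] exI[of _ "\<lambda>_. d"]) auto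
next
  case True
  then obtain b0 where b0: "h b0 \<noteq> 0" by blast
  have "A \<noteq> {}" using card_A by auto
  then obtain t where t: "t \<in> A" by blast
  obtain r where r: "r \<in> A" "r \<noteq> t" using ex_not_in_smaller_card[of "{t}" A] card_A by auto
  obtain u \<phi> where "\<forall>s. \<phi> s \<in> D" "\<And>b. h b = u (b t) * (\<Prod>s\<in>A - {t}. \<phi> s (b s))"
    using factorizes_but_one_factor[OF t b0] by blast
  then show ?thesis by (rule factorizes_if_one_free_factor[OF t r])
qed

end

section \<open>Pairings and paired products\<close>

definition pairing_on :: "'a set \<Rightarrow> ('a \<Rightarrow> 'a) \<Rightarrow> bool" where
  "pairing_on I \<tau> \<longleftrightarrow> (\<forall>p\<in>I. \<tau> p \<in> I \<and> \<tau> p \<noteq> p \<and> \<tau> (\<tau> p) = p)"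

definition pair_const :: "'a set \<Rightarrow> ('a \<Rightarrow> 'a) \<Rightarrow> ('a \<Rightarrow> bool) \<Rightarrow> bool" where
  "pair_const I \<tau> y \<longleftrightarrow> (\<forall>p\<in>I. y p = y (\<tau> p))"

definition pair_reps :: "nat set \<Rightarrow> (nat \<Rightarrow> nat) \<Rightarrow> nat set" where
  "pair_reps I \<tau> = {p\<in>I. p < \<tau> p}"

definition paired_form ::
  "(bool \<Rightarrow> complex) set \<Rightarrow> nat set \<Rightarrow> (nat \<Rightarrow> nat) \<Rightarrow> ((nat \<Rightarrow> bool) \<Rightarrow> complex) \<Rightarrow> bool" where
  "paired_form D I \<tau> G \<longleftrightarrow> (\<exists>c \<phi>. (\<forall>p. \<phi> p \<in> D) \<and>
     (\<forall>y. G y = (if pair_const I \<tau> y then c * (\<Prod>p\<in>pair_reps I \<tau>. \<phi> p (y p)) else 0)))"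

text \<open>For diagonal \<open>B\<close> these are the functions of \<open>\<lambda>\<langle>B\<rangle>\<close>, with variables indexed by \<open>I\<close> and
  \<open>D\<close> the set of diagonals: each factor \<open>M(x\<^sub>p, x\<^sub>\<tau>\<^sub>p)\<close> forces \<open>x\<^sub>p = x\<^sub>\<tau>\<^sub>p\<close> and
  contributes a diagonal entry.\<close>
definition paired_product ::
  "(bool \<Rightarrow> complex) set \<Rightarrow> nat set \<Rightarrow> ((nat \<Rightarrow> bool) \<Rightarrow> complex) \<Rightarrow> bool" where
  "paired_product D I G \<longleftrightarrow> (\<exists>\<tau>. pairing_on I \<tau> \<and> paired_form D I \<tau> G)"

definition contract ::
  "((nat \<Rightarrow> bool) \<Rightarrow> complex) \<Rightarrow> (bool \<Rightarrow> complex) \<Rightarrow> nat \<Rightarrow> nat \<Rightarrow> (nat \<Rightarrow> bool) \<Rightarrow> complex" where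
  "contract G w i j y = dot w (\<lambda>a. G (y(i := a, j := a)))"

lemma pairing_onD: "pairing_on I \<tau> \<Longrightarrow> p \<in> I \<Longrightarrow> \<tau> p \<in> I \<and> \<tau> p \<noteq> p \<and> \<tau> (\<tau> p) = p"
  unfolding pairing_on_def by blast

lemma pair_constD: "pair_const I \<tau> y \<Longrightarrow> p \<in> I \<Longrightarrow> y p = y (\<tau> p)"
  unfolding pair_const_def by blast

lemma pair_const_pair_indicator:
  assumes "pairing_on I \<tau>" "p \<in> I"
  shows "pair_const I \<tau> (\<lambda>q. q = p \<or> q = \<tau> p)"
  using assms unfolding pair_const_def pairing_on_def by metis

lemma pair_const_flip_pair:
  assumes "pairing_on I \<tau>" "pair_const I \<tau> y" "p \<in> I"
  shows "pair_const I \<tau> (y(p := \<not> y p, \<tau> p := \<not> y p))"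
  using assms unfolding pair_const_def pairing_on_def by (metis fun_upd_apply)

lemma pairing_eq_if_pair_const_imp:
  assumes "pairing_on I \<tau>" "pairing_on I \<tau>'" "\<And>y. pair_const I \<tau>' y \<Longrightarrow> pair_const I \<tau> y"
    and "p \<in> I"
  shows "\<tau> p = \<tau>' p"
proof -
  have "pair_const I \<tau> (\<lambda>q. q = p \<or> q = \<tau>' p)"
    using assms pair_const_pair_indicator[OF assms(2,4)] by blast
  then have "\<tau> p = p \<or> \<tau> p = \<tau>' p" using assms(4) unfolding pair_const_def by auto
  then show ?thesis using pairing_onD[OF assms(1,4)] by auto
qed

lemma paired_form_cong:
  assumes "\<And>p. p \<in> I \<Longrightarrow> \<tau> p = \<tau>' p"
  shows "paired_form D I \<tau> G = paired_form D I \<tau>' G"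
proof -
  have "pair_const I \<tau> = pair_const I \<tau>'" "pair_reps I \<tau> = pair_reps I \<tau>'"
    using assms unfolding pair_const_def pair_reps_def by (auto simp: fun_eq_iff)
  then show ?thesis unfolding paired_form_def by simp
qed

lemma paired_form_zero: "D \<noteq> {} \<Longrightarrow> paired_form D I \<tau> (\<lambda>_. 0)"
  unfolding paired_form_def by (auto intro!: exI[of _ 0])

lemma paired_form_support_subset: "paired_form D I \<tau> G \<Longrightarrow> G y \<noteq> 0 \<Longrightarrow> pair_const I \<tau> y"
  unfolding paired_form_def by (metis (full_types))

text \<open>If \<open>\<tau>\<^sub>a p \<noteq> \<tau>\<^sub>b p\<close>, flipping \<open>x\<close> on the \<open>\<tau>\<^sub>b\<close>-pair of \<open>p\<close> kills \<open>G\<^sub>a\<close> but not \<open>G\<^sub>b\<close>, and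
  vice versa; \<open>G\<^sub>c\<close> survives both flips, which leaves no consistent partner for \<open>\<tau>\<^sub>a p\<close>
  under \<open>\<tau>\<^sub>c\<close>.\<close>
lemma pairings_agree_if_supports_combine:
  fixes Ga Gb Gc :: "('a \<Rightarrow> bool) \<Rightarrow> 'b::idom"
  assumes \<tau>a: "pairing_on I \<tau>a" and \<tau>b: "pairing_on I \<tau>b" and \<tau>c: "pairing_on I \<tau>c"
    and Ga: "\<And>y. Ga y \<noteq> 0 \<longleftrightarrow> pair_const I \<tau>a y"
    and Gb: "\<And>y. Gb y \<noteq> 0 \<longleftrightarrow> pair_const I \<tau>b y"
    and Gc: "\<And>y. Gc y \<noteq> 0 \<Longrightarrow> pair_const I \<tau>c y"
    and Gc_combination: "\<And>y. Gc y = \<alpha> * Ga y + \<beta> * Gb y" and "\<alpha> \<noteq> 0" "\<beta> \<noteq> 0"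
    and xa: "pair_const I \<tau>a x" and xb: "pair_const I \<tau>b x"
    and p: "p \<in> I"
  shows "\<tau>a p = \<tau>b p"
proof (rule ccontr)
  assume ne: "\<tau>a p \<noteq> \<tau>b p"
  define q1 where "q1 = \<tau>a p"
  define q2 where "q2 = \<tau>b p"
  have q1: "q1 \<in> I" "q1 \<noteq> p" using pairing_onD[OF \<tau>a p] unfolding q1_def by auto
  have q2: "q2 \<in> I" "q2 \<noteq> p" using pairing_onD[OF \<tau>b p] unfolding q2_def by auto
  have q12: "q1 \<noteq> q2" using ne unfolding q1_def q2_def .
  have xq1: "x q1 = x p" using xa p unfolding pair_const_def q1_def by auto
  have xq2: "x q2 = x p" using xb p unfolding pair_const_def q2_def by auto
  define z where "z = x(p := \<not> x p, q2 := \<not> x p)"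
  define z' where "z' = x(p := \<not> x p, q1 := \<not> x p)"
  have "z p \<noteq> z (\<tau>a p)" using q1 q12 xq1 unfolding z_def q1_def[symmetric] by auto
  then have "Ga z = 0" using Ga p unfolding pair_const_def by blast
  moreover have "Gb z \<noteq> 0" using Gb pair_const_flip_pair[OF \<tau>b xb p] unfolding z_def q2_def by simp
  ultimately have "Gc z \<noteq> 0" using Gc_combination[of z] \<open>\<beta> \<noteq> 0\<close> by simp
  then have zc: "pair_const I \<tau>c z" by (rule Gc)
  have "z' p \<noteq> z' (\<tau>b p)" using q2 q12 xq2 unfolding z'_def q2_def[symmetric] by auto
  then have "Gb z' = 0" using Gb p unfolding pair_const_def by blast
  moreover have "Ga z' \<noteq> 0" using Ga pair_const_flip_pair[OF \<tau>a xa p] unfolding z'_def q1_def by simp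
  ultimately have "Gc z' \<noteq> 0" using Gc_combination[of z'] \<open>\<alpha> \<noteq> 0\<close> by simp
  then have zc': "pair_const I \<tau>c z'" by (rule Gc)
  define r where "r = \<tau>c q1"
  have r: "r \<noteq> q1" using pairing_onD[OF \<tau>c q1(1)] unfolding r_def by auto
  have "z r = z q1" "z' r = z' q1" using zc zc' q1 unfolding pair_const_def r_def by auto
  then show False using r q1 q2 q12 xq1 xq2 unfolding z_def z'_def
    by (cases "r = p"; cases "r = q2") auto
qed

lemma card_pair_reps:
  assumes "pairing_on I \<tau>" "finite I"
  shows "card I = 2 * card (pair_reps I \<tau>)"
proof -
  define A where "A = pair_reps I \<tau>"
  have A: "t \<in> I \<and> t < \<tau> t \<and> \<tau> t \<in> I \<and> \<tau> t \<notin> A \<and> \<tau> (\<tau> t) = t" if "t \<in> A" for t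
    using that pairing_onD[OF assms(1), of t] unfolding A_def pair_reps_def by auto
  have "I = A \<union> \<tau> ` A"
  proof
    show "I \<subseteq> A \<union> \<tau> ` A"
    proof
      fix p assume p: "p \<in> I"
      show "p \<in> A \<union> \<tau> ` A"
      proof (cases "p < \<tau> p")
        case True then show ?thesis using p unfolding A_def pair_reps_def by auto
      next
        case False
        then have "\<tau> p \<in> A" using pairing_onD[OF assms(1) p] unfolding A_def pair_reps_def by auto
        moreover have "p = \<tau> (\<tau> p)" using pairing_onD[OF assms(1) p] by auto
        ultimately show ?thesis by blast
      qed
    qed
  qed (use A in auto)
  moreover have "A \<inter> \<tau> ` A = {}" using A by auto
  moreover have "inj_on \<tau> A" by (rule inj_onI) (metis A)
  moreover have "finite A" using assms(2) unfolding A_def pair_reps_def by simp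
  ultimately show ?thesis unfolding A_def[symmetric] by (simp add: card_Un_disjoint card_image)
qed

definition flip :: "nat \<Rightarrow> nat" where
  "flip k = (if even k then Suc k else k - 1)"

lemma flip_props:
  assumes "k < 2 * L"
  shows "flip k < 2 * L" "flip (flip k) = k" "flip k \<noteq> k" "flip k div 2 = k div 2"
  using assms unfolding flip_def by (auto elim: oddE)

lemma pairing_on_flip: "pairing_on {..<2 * L} flip"
  unfolding pairing_on_def using flip_props by auto

section \<open>Functions whose contractions are paired products\<close>

locale paired_contractions =
  fixes N :: nat and F :: "(nat \<Rightarrow> bool) \<Rightarrow> complex" and D :: "(bool \<Rightarrow> complex) set"
    and w1 w2 w3 :: "bool \<Rightarrow> complex"
  assumes N_ge_6: "6 \<le> N" and N_even: "even N"
    and F_cong: "\<And>y y'. (\<forall>p<N. y p = y' p) \<Longrightarrow> F y = F y'"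
    and D_nonzero: "\<And>d a. d \<in> D \<Longrightarrow> d a \<noteq> 0" and D_nonempty: "D \<noteq> {}"
    and d12: "det2 w1 w2 \<noteq> 0" and d13: "det2 w1 w3 \<noteq> 0" and d23: "det2 w2 w3 \<noteq> 0"
    and contraction_paired: "\<And>i j w. i < N \<Longrightarrow> j < N \<Longrightarrow> i \<noteq> j \<Longrightarrow> w \<in> {w1, w2, w3} \<Longrightarrow>
      paired_product D ({..<N} - {i, j}) (contract F w i j)"
begin

lemma prod_D_nonzero:
  assumes "finite A" "\<forall>p. \<phi> p \<in> D"
  shows "(\<Prod>p\<in>A. \<phi> p (y p)) \<noteq> 0"
  using assms D_nonzero by (simp add: prod_zero_iff)

lemma paired_form_support:
  assumes "paired_form D I \<tau> G" "G x \<noteq> 0" "finite I"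
  shows "G y \<noteq> 0 \<longleftrightarrow> pair_const I \<tau> y"
proof -
  obtain c \<phi> where \<phi>: "\<forall>p. \<phi> p \<in> D"
    and G: "\<And>y. G y = (if pair_const I \<tau> y then c * (\<Prod>p\<in>pair_reps I \<tau>. \<phi> p (y p)) else 0)"
    using assms(1) unfolding paired_form_def by blast
  have "c \<noteq> 0" using assms(2) G[of x] by (auto split: if_splits)
  moreover have "finite (pair_reps I \<tau>)" using assms(3) unfolding pair_reps_def by simp
  ultimately show ?thesis using G[of y] prod_D_nonzero[OF _ \<phi>, of _ y] by auto
qed

lemma contractions_common_pairing:
  assumes ij: "i < N" "j < N" "i \<noteq> j"
    and wabc: "{wa, wb, wc} = {w1, w2, w3}"
    and dab: "det2 wa wb \<noteq> 0" and dac: "det2 wa wc \<noteq> 0" and dbc: "det2 wb wc \<noteq> 0"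
    and xa: "contract F wa i j x \<noteq> 0" and xb: "contract F wb i j x \<noteq> 0"
  defines "I \<equiv> {..<N} - {i, j}"
  shows "\<exists>\<tau>. pairing_on I \<tau> \<and> (\<forall>y. pair_const I \<tau> y \<longrightarrow> contract F wa i j y \<noteq> 0) \<and>
    (\<forall>w\<in>{w1, w2, w3}. paired_form D I \<tau> (contract F w i j))"
proof -
  have fin: "finite I" unfolding I_def by simp
  have wa: "wa \<in> {w1, w2, w3}" and wb: "wb \<in> {w1, w2, w3}" and wc: "wc \<in> {w1, w2, w3}"
    using wabc by auto
  obtain \<tau>a where \<tau>a: "pairing_on I \<tau>a" and Ga: "paired_form D I \<tau>a (contract F wa i j)"
    using contraction_paired[OF ij wa] unfolding paired_product_def I_def by blast
  obtain \<tau>b where \<tau>b: "pairing_on I \<tau>b" and Gb: "paired_form D I \<tau>b (contract F wb i j)"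
    using contraction_paired[OF ij wb] unfolding paired_product_def I_def by blast
  obtain \<tau>c where \<tau>c: "pairing_on I \<tau>c" and Gc: "paired_form D I \<tau>c (contract F wc i j)"
    using contraction_paired[OF ij wc] unfolding paired_product_def I_def by blast
  obtain \<alpha> \<beta> where "\<alpha> \<noteq> 0" "\<beta> \<noteq> 0" and wc_combination: "\<And>v. dot wc v = \<alpha> * dot wa v + \<beta> * dot wb v"
    using dot_linear_combination[OF dab dac dbc] by blast
  have Gc_combination: "contract F wc i j y = \<alpha> * contract F wa i j y + \<beta> * contract F wb i j y" for y
    unfolding contract_def wc_combination ..
  have supp_a: "contract F wa i j y \<noteq> 0 \<longleftrightarrow> pair_const I \<tau>a y" for y
    using paired_form_support[OF Ga xa fin] .
  have supp_b: "contract F wb i j y \<noteq> 0 \<longleftrightarrow> pair_const I \<tau>b y" for y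
    using paired_form_support[OF Gb xb fin] .
  have "\<tau>a p = \<tau>b p" if "p \<in> I" for p
    by (rule pairings_agree_if_supports_combine[OF \<tau>a \<tau>b \<tau>c supp_a supp_b
          paired_form_support_subset[OF Gc] Gc_combination])
      (use \<open>\<alpha> \<noteq> 0\<close> \<open>\<beta> \<noteq> 0\<close> supp_a[of x] supp_b[of x] xa xb that in auto)
  then have Gb': "paired_form D I \<tau>a (contract F wb i j)" using Gb paired_form_cong by blast
  have "paired_form D I \<tau>a (contract F wc i j)"
  proof (cases "\<exists>z. contract F wc i j z \<noteq> 0")
    case False
    then show ?thesis using paired_form_zero[OF D_nonempty] by (simp add: fun_eq_iff[symmetric])
  next
    case True
    then obtain z where "contract F wc i j z \<noteq> 0" by blast
    note supp_c = paired_form_support[OF Gc this fin]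
    have "pair_const I \<tau>a y" if "pair_const I \<tau>c y" for y
    proof -
      have "contract F wa i j y \<noteq> 0 \<or> contract F wb i j y \<noteq> 0"
        using supp_c[of y] that Gc_combination[of y] by auto
      then show ?thesis using supp_a supp_b \<open>\<And>p. p \<in> I \<Longrightarrow> \<tau>a p = \<tau>b p\<close>
        by (auto simp: pair_const_def)
    qed
    then have "\<tau>a p = \<tau>c p" if "p \<in> I" for p
      using pairing_eq_if_pair_const_imp[OF \<tau>a \<tau>c _ that] by blast
    then show ?thesis using Gc paired_form_cong by blast
  qed
  then have "\<forall>w\<in>{w1, w2, w3}. paired_form D I \<tau>a (contract F w i j)"
    using Ga Gb' wabc by auto
  then show ?thesis using \<tau>a supp_a by blast
qed

text \<open>\<open>Q\<close> extends the pairing shared by the contractions at \<open>(i, j)\<close> by the pair \<open>{i, j}\<close>.\<close>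
definition good_pairing :: "nat \<Rightarrow> nat \<Rightarrow> (nat \<Rightarrow> nat) \<Rightarrow> bool" where
  "good_pairing i j Q \<longleftrightarrow> i < N \<and> j < N \<and> i \<noteq> j \<and> pairing_on {..<N} Q \<and> Q i = j \<and>
     (\<forall>z. F z \<noteq> 0 \<longrightarrow> z i = z j \<longrightarrow> pair_const {..<N} Q z) \<and>
     (\<forall>y. pair_const {..<N} Q y \<longrightarrow> (\<exists>a. F (y(i := a, j := a)) \<noteq> 0)) \<and>
     (\<forall>w\<in>{w1, w2, w3}. \<exists>c \<phi>. (\<forall>p. \<phi> p \<in> D) \<and> (\<forall>y. pair_const {..<N} Q y \<longrightarrow>
        contract F w i j y = c * (\<Prod>p\<in>pair_reps {..<N} Q - {i, j}. \<phi> p (y p))))"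

lemma good_pairing_if_contractions_nonzero:
  assumes ij: "i < N" "j < N" "i \<noteq> j"
    and wabc: "{wa, wb, wc} = {w1, w2, w3}"
    and dab: "det2 wa wb \<noteq> 0" and dac: "det2 wa wc \<noteq> 0" and dbc: "det2 wb wc \<noteq> 0"
    and xa: "contract F wa i j x \<noteq> 0" and xb: "contract F wb i j x \<noteq> 0"
  shows "\<exists>Q. good_pairing i j Q"
proof -
  define I where "I = {..<N} - {i, j}"
  obtain \<tau> where \<tau>: "pairing_on I \<tau>" and supp_a: "\<And>y. pair_const I \<tau> y \<Longrightarrow> contract F wa i j y \<noteq> 0"
    and G: "\<And>w. w \<in> {w1, w2, w3} \<Longrightarrow> paired_form D I \<tau> (contract F w i j)"
    using contractions_common_pairing[OF ij wabc dab dac dbc xa xb] unfolding I_def by blast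
  have wabc_sub: "{wa, wb} \<subseteq> {w1, w2, w3}" unfolding wabc[symmetric] by auto
  define Q where "Q = \<tau>(i := j, j := i)"
  have Q: "pairing_on {..<N} Q"
    unfolding pairing_on_def Q_def using pairing_onD[OF \<tau>] ij unfolding I_def by auto
  have Q_const: "pair_const {..<N} Q y \<longleftrightarrow> pair_const I \<tau> y \<and> y i = y j" for y
  proof -
    have "\<tau> p \<noteq> i \<and> \<tau> p \<noteq> j" if "p \<in> I" for p using pairing_onD[OF \<tau> that] unfolding I_def by auto
    then show ?thesis unfolding pair_const_def Q_def I_def using ij by auto
  qed
  have Q_reps: "pair_reps {..<N} Q - {i, j} = pair_reps I \<tau>"
    unfolding pair_reps_def Q_def I_def by auto
  have "pair_const {..<N} Q z" if "F z \<noteq> 0" "z i = z j" for z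
  proof (rule ccontr)
    assume "\<not> pair_const {..<N} Q z"
    then have "\<not> pair_const I \<tau> z" using Q_const that(2) by blast
    have "dot w (\<lambda>a. F (z(i := a, j := a))) = 0" if w: "w \<in> {wa, wb}" for w
      using paired_form_support_subset[OF G, of w z] w wabc_sub \<open>\<not> pair_const I \<tau> z\<close>
      unfolding contract_def by blast
    then have "F (z(i := z i, j := z i)) = 0"
      using dot_eq_0_imp_eq_0[OF dab, of "\<lambda>a. F (z(i := a, j := a))" "z i"] by simp
    moreover have "z(i := z i, j := z i) = z" using that(2) by (auto simp: fun_eq_iff)
    ultimately show False using that(1) by simp
  qed
  moreover have "\<exists>a. F (y(i := a, j := a)) \<noteq> 0" if "pair_const {..<N} Q y" for y
  proof (rule ccontr)
    assume "\<nexists>a. F (y(i := a, j := a)) \<noteq> 0"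
    then have "contract F wa i j y = 0" unfolding contract_def dot_def by simp
    then show False using supp_a Q_const that by blast
  qed
  moreover have "\<exists>c \<phi>. (\<forall>p. \<phi> p \<in> D) \<and> (\<forall>y. pair_const {..<N} Q y \<longrightarrow>
        contract F w i j y = c * (\<Prod>p\<in>pair_reps {..<N} Q - {i, j}. \<phi> p (y p)))"
    if w: "w \<in> {w1, w2, w3}" for w
  proof -
    obtain c \<phi> where "\<forall>p. \<phi> p \<in> D" "\<And>y. contract F w i j y
        = (if pair_const I \<tau> y then c * (\<Prod>p\<in>pair_reps I \<tau>. \<phi> p (y p)) else 0)"
      using G[OF w] unfolding paired_form_def by blast
    then show ?thesis using Q_const Q_reps by (intro exI[of _ c] exI[of _ \<phi>]) auto
  qed
  ultimately have "good_pairing i j Q" unfolding good_pairing_def using ij Q by (auto simp: Q_def)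
  then show ?thesis by blast
qed

lemma good_pairing_exists:
  assumes ij: "i < N" "j < N" "i \<noteq> j" and x: "F x \<noteq> 0" "x i = x j"
  shows "\<exists>Q. good_pairing i j Q"
proof -
  define v where "v = (\<lambda>a. F (x(i := a, j := a)))"
  have "x(i := x i, j := x i) = x" using x(2) by (auto simp: fun_eq_iff)
  then have v: "v (x i) \<noteq> 0" unfolding v_def using x(1) by simp
  have contract_x: "contract F w i j x = dot w v" for w unfolding contract_def v_def ..
  have d21: "det2 w2 w1 \<noteq> 0" and d31: "det2 w3 w1 \<noteq> 0" and d32: "det2 w3 w2 \<noteq> 0"
    using d12 d13 d23 det2_commute by (metis neg_equal_0_iff_equal)+
  consider "dot w1 v \<noteq> 0" "dot w2 v \<noteq> 0" | "dot w1 v = 0" | "dot w2 v = 0" by blast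
  then show ?thesis
  proof cases
    case 1
    then show ?thesis
      by (intro good_pairing_if_contractions_nonzero[OF ij _ d12 d13 d23, of x]) (auto simp: contract_x)
  next
    case 2
    then have "dot w2 v \<noteq> 0" "dot w3 v \<noteq> 0"
      using dot_eq_0_imp_eq_0[OF d12, of v "x i"] dot_eq_0_imp_eq_0[OF d13, of v "x i"] v by auto
    then show ?thesis
      by (intro good_pairing_if_contractions_nonzero[OF ij _ d23 d21 d31, of x]) (auto simp: contract_x)
  next
    case 3
    then have "dot w1 v \<noteq> 0" "dot w3 v \<noteq> 0"
      using dot_eq_0_imp_eq_0[OF d12, of v "x i"] dot_eq_0_imp_eq_0[OF d23, of v "x i"] v by auto
    then show ?thesis
      by (intro good_pairing_if_contractions_nonzero[OF ij _ d13 d12 d32, of x]) (auto simp: contract_x)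
  qed
qed

lemma good_pairing_pairing: "good_pairing i j Q \<Longrightarrow> pairing_on {..<N} Q"
  unfolding good_pairing_def by auto

lemma good_pairing_support: "good_pairing i j Q \<Longrightarrow> F z \<noteq> 0 \<Longrightarrow> z i = z j \<Longrightarrow> pair_const {..<N} Q z"
  unfolding good_pairing_def by auto

lemma good_pairing_lift:
  "good_pairing i j Q \<Longrightarrow> pair_const {..<N} Q y \<Longrightarrow> \<exists>a. F (y(i := a, j := a)) \<noteq> 0"
  unfolding good_pairing_def by auto

lemma good_pairing_partners: "good_pairing i j Q \<Longrightarrow> Q i = j \<and> Q j = i \<and> i < N \<and> j < N \<and> i \<noteq> j"
  unfolding good_pairing_def pairing_on_def by auto

lemma good_pairing_commute:
  assumes "good_pairing i j Q"
  shows "good_pairing j i Q"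
proof -
  have "i \<noteq> j" using assms unfolding good_pairing_def by auto
  then have upd: "y(j := a, i := a) = y(i := a, j := a)" for y a by (auto simp: fun_eq_iff)
  have "contract F w j i y = contract F w i j y" for w y unfolding contract_def upd ..
  then show ?thesis using assms good_pairing_partners[OF assms]
    unfolding good_pairing_def upd by (auto simp: insert_commute)
qed

lemma good_pairing_cong:
  assumes "good_pairing i j Q" "\<forall>p<N. Q' p = Q p"
  shows "good_pairing i j Q'"
proof -
  have "pair_const {..<N} Q' = pair_const {..<N} Q" "pair_reps {..<N} Q' = pair_reps {..<N} Q"
    "pairing_on {..<N} Q' = pairing_on {..<N} Q"
    using assms(2) unfolding pair_const_def pair_reps_def pairing_on_def by (auto simp: fun_eq_iff)
  moreover have "Q' i = Q i" using assms unfolding good_pairing_def by auto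
  ultimately show ?thesis using assms(1) unfolding good_pairing_def by simp
qed

lemma good_pairing_update_const:
  assumes "good_pairing i j Q" "pair_const {..<N} Q y"
  shows "pair_const {..<N} Q (y(i := a, j := a))"
  using assms good_pairing_partners[OF assms(1)] good_pairing_pairing[OF assms(1)]
  unfolding pair_const_def pairing_on_def by (metis fun_upd_apply)

text \<open>Every \<open>Q\<^sub>1\<close>-constant assignment becomes, after adjusting \<open>x\<^sub>i = x\<^sub>j\<close>, a support point of \<open>F\<close>
  with \<open>x\<^sub>r = x\<^sub>Q\<^sub>1\<^sub>r\<close>, hence \<open>Q\<^sub>2\<close>-constant; testing this on the indicator of a \<open>Q\<^sub>1\<close>-pair
  away from \<open>i, j\<close> forces \<open>Q\<^sub>2\<close> to keep that pair.\<close>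
lemma good_pairings_agree_off:
  assumes g1: "good_pairing i j Q1" and r: "r < N" "r \<noteq> i" "r \<noteq> j"
    and g2: "good_pairing r (Q1 r) Q2"
    and p: "p < N" "p \<notin> {i, j}" "Q2 p \<notin> {i, j}"
  shows "Q2 p = Q1 p"
proof (rule ccontr)
  assume ne: "Q2 p \<noteq> Q1 p"
  have Q1: "pairing_on {..<N} Q1" and Q2: "pairing_on {..<N} Q2"
    using g1 g2 by (auto dest: good_pairing_pairing)
  note ij = good_pairing_partners[OF g1]
  define y where "y = (\<lambda>q. q = p \<or> q = Q1 p)"
  have y: "pair_const {..<N} Q1 y" unfolding y_def using pair_const_pair_indicator[OF Q1] p by auto
  then obtain a where a: "F (y(i := a, j := a)) \<noteq> 0" using good_pairing_lift[OF g1] by blast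
  have "pair_const {..<N} Q1 (y(i := a, j := a))" using good_pairing_update_const[OF g1 y] .
  then have "(y(i := a, j := a)) r = (y(i := a, j := a)) (Q1 r)" by (rule pair_constD) (use r in simp)
  then have "pair_const {..<N} Q2 (y(i := a, j := a))" using good_pairing_support[OF g2 a] by simp
  then have "(y(i := a, j := a)) p = (y(i := a, j := a)) (Q2 p)" by (rule pair_constD) (use p in simp)
  moreover have "Q1 p \<notin> {i, j}" using p ij pairing_onD[OF Q1, of p] by auto
  moreover have "Q2 p \<noteq> p" using pairing_onD[OF Q2, of p] p by auto
  ultimately show False using p ne unfolding y_def by auto
qed

lemma good_pairings_agree_or_split:
  assumes g1: "good_pairing i j Q1" and r: "r < N" "r \<noteq> i" "r \<noteq> j"
    and g2: "good_pairing r (Q1 r) Q2"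
  shows "(\<forall>p<N. Q2 p = Q1 p) \<or>
    (Q2 i \<notin> {i, j} \<and> Q2 j = Q1 (Q2 i) \<and> (\<forall>z. F z \<noteq> 0 \<longrightarrow> z i = z j \<longrightarrow> z i = z (Q2 i)))"
proof -
  have Q1: "pairing_on {..<N} Q1" and Q2: "pairing_on {..<N} Q2"
    using g1 g2 by (auto dest: good_pairing_pairing)
  note ij = good_pairing_partners[OF g1]
  note agree_off = good_pairings_agree_off[OF g1 r g2]
  show ?thesis
  proof (cases "Q2 i = j")
    case True
    have "Q2 j = i" using pairing_onD[OF Q2, of i] True ij by auto
    have "Q2 p = Q1 p" if p: "p < N" for p
    proof -
      consider "p = i" | "p = j" | "p \<notin> {i, j}" by blast
      then show ?thesis
      proof cases
        case 3
        have "Q2 (Q2 p) = p" using pairing_onD[OF Q2, of p] p by auto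
        then have "Q2 p \<notin> {i, j}" using True \<open>Q2 j = i\<close> 3 by auto
        then show ?thesis using agree_off p 3 by blast
      qed (use True \<open>Q2 j = i\<close> ij in auto)
    qed
    then show ?thesis by blast
  next
    case False
    define u where "u = Q2 i"
    have u: "u \<notin> {i, j}" "u < N" using False pairing_onD[OF Q2, of i] ij unfolding u_def by auto
    have Q1u: "Q1 (Q1 u) = u" "Q1 u \<noteq> u" "Q1 u < N" using pairing_onD[OF Q1, of u] u by auto
    then have u': "Q1 u \<notin> {i, j}" using ij u by auto
    have "Q2 (Q1 u) \<in> {i, j}"
    proof (rule ccontr)
      assume "Q2 (Q1 u) \<notin> {i, j}"
      then have "Q2 (Q1 u) = u" using agree_off[of "Q1 u"] u' Q1u by auto
      then have "Q1 u = Q2 u" using pairing_onD[OF Q2, of "Q1 u"] Q1u by auto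
      then show False using pairing_onD[OF Q2, of i] ij u' unfolding u_def by auto
    qed
    moreover have "Q2 (Q1 u) \<noteq> i" using pairing_onD[OF Q2, of "Q1 u"] Q1u unfolding u_def by auto
    ultimately have "Q2 (Q1 u) = j" by auto
    then have "Q2 j = Q1 u" using pairing_onD[OF Q2, of "Q1 u"] Q1u by auto
    moreover have "z i = z u" if "F z \<noteq> 0" "z i = z j" for z
    proof -
      have "z r = z (Q1 r)" by (rule pair_constD[OF good_pairing_support[OF g1 that]]) (use r in simp)
      then have "pair_const {..<N} Q2 z" using good_pairing_support[OF g2 that(1)] by simp
      then show ?thesis using ij unfolding pair_const_def u_def by auto
    qed
    ultimately show ?thesis using u unfolding u_def by blast
  qed
qed

definition stable_pairing :: "(nat \<Rightarrow> nat) \<Rightarrow> bool" where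
  "stable_pairing Q \<longleftrightarrow> pairing_on {..<N} Q \<and> (\<forall>r<N. good_pairing r (Q r) Q)"

lemma stable_if_good_pairings_unique:
  assumes g: "good_pairing i j Q" and x: "F x \<noteq> 0" "pair_const {..<N} Q x"
    and unique: "\<And>r Q'. r < N \<Longrightarrow> r \<notin> {i, j} \<Longrightarrow> good_pairing r (Q r) Q' \<Longrightarrow> \<forall>p<N. Q' p = Q p"
  shows "stable_pairing Q"
proof -
  have Q: "pairing_on {..<N} Q" using good_pairing_pairing[OF g] .
  note ij = good_pairing_partners[OF g]
  have "good_pairing r (Q r) Q" if r: "r < N" for r
  proof -
    consider "r = i" | "r = j" | "r \<notin> {i, j}" by blast
    then show ?thesis
    proof cases
      case 1 then show ?thesis using g ij by simp
    next
      case 2 then show ?thesis using good_pairing_commute[OF g] ij by simp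
    next
      case 3
      have "x r = x (Q r)" by (rule pair_constD[OF x(2)]) (use r in simp)
      moreover have "Q r < N" "Q r \<noteq> r" using pairing_onD[OF Q, of r] r by auto
      ultimately obtain Q' where g': "good_pairing r (Q r) Q'"
        using good_pairing_exists[OF r, of "Q r" x] x by auto
      have "\<forall>p<N. Q' p = Q p" by (rule unique[OF r 3 g'])
      then show ?thesis by (intro good_pairing_cong[OF g']) simp
    qed
  qed
  then show ?thesis using Q unfolding stable_pairing_def by blast
qed

text \<open>Evaluate both splitting conditions at a support point of \<open>F\<close> extending the indicator of
  the pair \<open>{r, Q r}\<close>: the first makes its value at \<open>i\<close> equal to its value \<open>False\<close> at
  \<open>Q' i\<close>, the second makes its value \<open>True\<close> at \<open>r\<close> spread to \<open>Q\<^sub>3 r\<close>, which lies outside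
  \<open>{r, Q r}\<close> and hence carries the value at \<open>i\<close> or \<open>False\<close>.\<close>
lemma no_second_split:
  assumes g: "good_pairing i j Q" and r: "r < N" "r \<notin> {i, j}"
    and g': "good_pairing r (Q r) Q'"
    and split: "Q' i \<notin> {i, j}" "\<forall>z. F z \<noteq> 0 \<longrightarrow> z i = z j \<longrightarrow> z i = z (Q' i)"
    and r': "r' < N" "r' \<notin> {r, Q r}" and g3: "good_pairing r' (Q' r') Q3"
  shows "\<forall>p<N. Q3 p = Q' p"
proof (rule ccontr)
  assume "\<not> (\<forall>p<N. Q3 p = Q' p)"
  moreover note ij = good_pairing_partners[OF g] and rs = good_pairing_partners[OF g']
  ultimately have split3: "Q3 r \<notin> {r, Q r}" "\<forall>z. F z \<noteq> 0 \<longrightarrow> z r = z (Q r) \<longrightarrow> z r = z (Q3 r)"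
    using good_pairings_agree_or_split[OF g' _ _ _ g3] r' by auto
  have Q: "pairing_on {..<N} Q" using good_pairing_pairing[OF g] .
  have Q': "pairing_on {..<N} Q'" using good_pairing_pairing[OF g'] .
  define y where "y = (\<lambda>q. q = r \<or> q = Q r)"
  have "pair_const {..<N} Q y" unfolding y_def using pair_const_pair_indicator[OF Q] r by auto
  then obtain a where a: "F (y(i := a, j := a)) \<noteq> 0" using good_pairing_lift[OF g] by blast
  define z where "z = y(i := a, j := a)"
  have Qr: "Q r \<notin> {i, j}" "Q r \<noteq> r" using pairing_onD[OF Q, of r] ij r by auto
  have Fz: "F z \<noteq> 0" using a unfolding z_def .
  have "z r" "z (Q r)" using r Qr unfolding z_def y_def by auto
  then have zQ3: "z (Q3 r)" using split3(2) Fz by metis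
  have "Q' i \<noteq> r" "Q' i \<noteq> Q r"
    using pairing_onD[OF Q', of i] pairing_onD[OF Q', of r] pairing_onD[OF Q, of r] ij rs r by auto
  then have "\<not> z (Q' i)" using split(1) unfolding z_def y_def by auto
  moreover have "z i = z j" unfolding z_def by simp
  then have "z i = z (Q' i)" using split(2) Fz by blast
  ultimately have "\<not> z i" by simp
  then show False using zQ3 split3(1) ij unfolding z_def y_def by (auto split: if_splits)
qed

lemma stable_pairing_exists:
  assumes x: "F x \<noteq> 0"
  shows "\<exists>Q. stable_pairing Q \<and> pair_const {..<N} Q x"
proof -
  obtain i j where ij: "i < N" "j < N" "i \<noteq> j" "x i = x j"
    using bool_pigeonhole[of N x] N_ge_6 by auto
  obtain Q where g: "good_pairing i j Q" using good_pairing_exists[OF ij(1-3) x ij(4)] by blast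
  have xQ: "pair_const {..<N} Q x" using good_pairing_support[OF g x ij(4)] .
  show ?thesis
  proof (cases "\<exists>r Q'. r < N \<and> r \<notin> {i, j} \<and> good_pairing r (Q r) Q' \<and> \<not> (\<forall>p<N. Q' p = Q p)")
    case False
    then have "stable_pairing Q" by (intro stable_if_good_pairings_unique[OF g x xQ]) blast
    then show ?thesis using xQ by blast
  next
    case True
    then obtain r Q' where r: "r < N" "r \<notin> {i, j}" and g': "good_pairing r (Q r) Q'"
      and "\<not> (\<forall>p<N. Q' p = Q p)" by blast
    then have split: "Q' i \<notin> {i, j}" "\<forall>z. F z \<noteq> 0 \<longrightarrow> z i = z j \<longrightarrow> z i = z (Q' i)"
      using good_pairings_agree_or_split[OF g _ _ _ g'] by auto
    have "x r = x (Q r)" by (rule pair_constD[OF xQ]) (use r in simp)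
    then have xQ': "pair_const {..<N} Q' x" using good_pairing_support[OF g' x] by simp
    have "Q' r = Q r" using good_pairing_partners[OF g'] by simp
    then have "stable_pairing Q'"
      using stable_if_good_pairings_unique[OF g' x xQ'] no_second_split[OF g r g' split] by simp
    then show ?thesis using xQ' by blast
  qed
qed

lemma stable_support_pair_const:
  assumes Q: "stable_pairing Q" and full: "\<And>y. pair_const {..<N} Q y \<Longrightarrow> F y \<noteq> 0"
    and z: "F z \<noteq> 0"
  shows "pair_const {..<N} Q z"
proof (rule ccontr)
  assume nz: "\<not> pair_const {..<N} Q z"
  have Q_pairing: "pairing_on {..<N} Q" and gQ: "\<And>r. r < N \<Longrightarrow> good_pairing r (Q r) Q"
    using Q unfolding stable_pairing_def by auto
  have split: "z p \<noteq> z (Q p)" if "p < N" for p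
    using good_pairing_support[OF gQ[OF that] z] nz by auto
  define b where "b = (if Q 0 = 1 then 2 else (1::nat))"
  have b: "b < N" "b \<noteq> 0" "b \<noteq> Q 0" unfolding b_def using N_ge_6 by auto
  have Q0: "Q 0 < N" "Q 0 \<noteq> 0" "Q (Q 0) = 0" using pairing_onD[OF Q_pairing, of 0] N_ge_6 by auto
  define p where "p = (if z 0 = z b then 0 else Q 0)"
  have p: "p < N" "z p = z b" "p \<in> {0, Q 0}" "p \<noteq> b"
    unfolding p_def using split[of 0] N_ge_6 Q0 b by auto
  have "card {0, Q 0, b, Q b} < card {..<N}"
    using card_length[of "[0, Q 0, b, Q b]"] N_ge_6 by simp
  then obtain c where c: "c < N" "c \<notin> {0, Q 0, b, Q b}"
    using ex_not_in_smaller_card[of "{0, Q 0, b, Q b}" "{..<N}"] by auto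
  have Qc: "Q c < N" "Q c \<noteq> c" "Q (Q c) = c" using pairing_onD[OF Q_pairing, of c] c by auto
  obtain Q2 where g2: "good_pairing p b Q2" using good_pairing_exists[OF p(1) b(1) p(4) z p(2)] by blast
  have Q2c: "Q2 c = Q c"
  proof (rule ccontr)
    assume ne: "Q2 c \<noteq> Q c"
    define y where "y = (\<lambda>t. t = c \<or> t = Q c)"
    have y: "pair_const {..<N} Q y" unfolding y_def using pair_const_pair_indicator[OF Q_pairing] c by auto
    have "Q c \<noteq> p" "Q c \<noteq> b" using c Qc p Q0 by auto
    then have "y p = y b" using c p unfolding y_def by auto
    then have "pair_const {..<N} Q2 y" using good_pairing_support[OF g2 full[OF y]] by simp
    then have "y c = y (Q2 c)" by (rule pair_constD) (use c in simp)
    then show False using ne pairing_onD[OF good_pairing_pairing[OF g2], of c] c unfolding y_def by auto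
  qed
  have "z c = z (Q2 c)" by (rule pair_constD[OF good_pairing_support[OF g2 z p(2)]]) (use c in simp)
  then show False using split[OF c(1)] Q2c by simp
qed

definition spread :: "(nat \<Rightarrow> nat) \<Rightarrow> (nat \<Rightarrow> bool) \<Rightarrow> nat \<Rightarrow> bool" where
  "spread Q b = (\<lambda>p. b (min p (Q p)))"

lemma spread_pair_const: "pairing_on {..<N} Q \<Longrightarrow> pair_const {..<N} Q (spread Q b)"
  unfolding pair_const_def spread_def pairing_on_def by (metis lessThan_iff min.commute)

lemma F_spread: "pair_const {..<N} Q y \<Longrightarrow> F (spread Q y) = F y"
  by (rule F_cong) (auto simp: spread_def min_def dest: pair_constD)

lemma contractions_spread_factorize:
  assumes Q: "stable_pairing Q" and t: "t \<in> pair_reps {..<N} Q" and w: "w \<in> {w1, w2, w3}"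
  shows "factorizes D (pair_reps {..<N} Q - {t}) (\<lambda>b. dot w (\<lambda>a. F (spread Q (b(t := a)))))"
proof -
  have Q_pairing: "pairing_on {..<N} Q" and gQ: "\<And>r. r < N \<Longrightarrow> good_pairing r (Q r) Q"
    using Q unfolding stable_pairing_def by auto
  have t': "t < N" "t < Q t" "Q t < N" "Q (Q t) = t" using t pairing_onD[OF Q_pairing, of t] unfolding pair_reps_def by auto
  obtain c \<phi> where \<phi>: "\<forall>p. \<phi> p \<in> D" and G: "\<And>y. pair_const {..<N} Q y \<Longrightarrow>
      contract F w t (Q t) y = c * (\<Prod>p\<in>pair_reps {..<N} Q - {t, Q t}. \<phi> p (y p))"
    using gQ[OF t'(1)] w unfolding good_pairing_def by blast
  have upd: "F ((spread Q b)(t := a, Q t := a)) = F (spread Q (b(t := a)))" for b a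
  proof (rule F_cong, intro allI impI)
    fix p assume p: "p < N"
    have "min p (Q p) = t \<longleftrightarrow> p = t \<or> p = Q t"
      using pairing_onD[OF Q_pairing, of p] p t' by (auto simp: min_def)
    then show "((spread Q b)(t := a, Q t := a)) p = spread Q (b(t := a)) p" unfolding spread_def by auto
  qed
  have "dot w (\<lambda>a. F (spread Q (b(t := a)))) = c * (\<Prod>p\<in>pair_reps {..<N} Q - {t}. \<phi> p (b p))" for b
  proof -
    have "dot w (\<lambda>a. F (spread Q (b(t := a)))) = contract F w t (Q t) (spread Q b)"
      unfolding contract_def upd ..
    also have "\<dots> = c * (\<Prod>p\<in>pair_reps {..<N} Q - {t, Q t}. \<phi> p (spread Q b p))"
      using G[OF spread_pair_const[OF Q_pairing]] .
    also have "pair_reps {..<N} Q - {t, Q t} = pair_reps {..<N} Q - {t}"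
      using t' unfolding pair_reps_def by auto
    also have "(\<Prod>p\<in>pair_reps {..<N} Q - {t}. \<phi> p (spread Q b p)) = (\<Prod>p\<in>pair_reps {..<N} Q - {t}. \<phi> p (b p))"
      by (rule prod.cong) (auto simp: spread_def min_def pair_reps_def)
    finally show ?thesis .
  qed
  then show ?thesis using \<phi> unfolding factorizes_def by blast
qed

theorem F_paired_product: "paired_product D {..<N} F"
proof (cases "\<exists>x. F x \<noteq> 0")
  case False
  obtain L where "N = 2 * L" using N_even by blast
  moreover have "F = (\<lambda>_. 0)" using False by auto
  ultimately show ?thesis
    unfolding paired_product_def using pairing_on_flip paired_form_zero[OF D_nonempty] by auto
next
  case True
  then obtain x where x: "F x \<noteq> 0" by blast
  obtain Q where Q: "stable_pairing Q" and xQ: "pair_const {..<N} Q x"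
    using stable_pairing_exists[OF x] by blast
  have Q_pairing: "pairing_on {..<N} Q" using Q unfolding stable_pairing_def by auto
  define A where "A = pair_reps {..<N} Q"
  have fin: "finite A" unfolding A_def pair_reps_def by simp
  have "3 \<le> card A" using card_pair_reps[OF Q_pairing] N_ge_6 unfolding A_def by simp
  then interpret factorizing_contractions A D w1 w2 w3 "\<lambda>b. F (spread Q b)"
    using fin D_nonzero d12 d13 d23 contractions_spread_factorize[OF Q] unfolding A_def
    by unfold_locales auto
  obtain c \<phi> where \<phi>: "\<forall>s. \<phi> s \<in> D" and F_prod: "\<And>b. F (spread Q b) = c * (\<Prod>s\<in>A. \<phi> s (b s))"
    using h_factorizes[OF D_nonempty] unfolding factorizes_def by blast
  have on_Q: "F y = c * (\<Prod>s\<in>A. \<phi> s (y s))" if "pair_const {..<N} Q y" for y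
    using F_spread[OF that] F_prod[of y] by simp
  have "c \<noteq> 0" using on_Q[OF xQ] x by auto
  then have "F y \<noteq> 0" if "pair_const {..<N} Q y" for y
    using on_Q[OF that] prod_D_nonzero[OF fin \<phi>] by simp
  then have "F y = (if pair_const {..<N} Q y then c * (\<Prod>p\<in>pair_reps {..<N} Q. \<phi> p (y p)) else 0)" for y
    using on_Q stable_support_pair_const[OF Q] unfolding A_def by auto
  then show ?thesis unfolding paired_product_def paired_form_def using Q_pairing \<phi> by blast
qed

end

section \<open>Enumerated pairings\<close>

text \<open>An enumeration \<open>\<sigma>\<close> of \<open>I\<close> by \<open>{..<2 * L}\<close> pairs \<open>\<sigma> (2 * j)\<close> with \<open>\<sigma> (2 * j + 1)\<close>; this is
  the pairing behind the variable permutation in the definition of \<open>\<lambda>\<langle>B\<rangle>\<close>.\<close>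
locale enumerated_pairing =
  fixes \<sigma> :: "nat \<Rightarrow> nat" and L :: nat and I :: "nat set"
  assumes bij: "bij_betw \<sigma> {..<2 * L} I"
begin

definition index :: "nat \<Rightarrow> nat" where
  "index = the_inv_into {..<2 * L} \<sigma>"

definition \<tau> :: "nat \<Rightarrow> nat" where
  "\<tau> p = \<sigma> (flip (index p))"

definition rep :: "nat \<Rightarrow> nat" where
  "rep j = min (\<sigma> (2 * j)) (\<sigma> (Suc (2 * j)))"

lemma inj: "inj_on \<sigma> {..<2 * L}"
  using bij by (simp add: bij_betw_def)

lemma index_less: "p \<in> I \<Longrightarrow> index p < 2 * L"
  unfolding index_def using the_inv_into_into[OF inj, of p "{..<2 * L}"] bij
  by (auto simp: bij_betw_def)

lemma sigma_index: "p \<in> I \<Longrightarrow> \<sigma> (index p) = p"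
  unfolding index_def using f_the_inv_into_f[OF inj] bij by (auto simp: bij_betw_def)

lemma index_sigma: "k < 2 * L \<Longrightarrow> index (\<sigma> k) = k"
  unfolding index_def using the_inv_into_f_f[OF inj] by auto

lemma sigma_in: "k < 2 * L \<Longrightarrow> \<sigma> k \<in> I"
  using bij by (auto simp: bij_betw_def)

lemma tau_sigma: "k < 2 * L \<Longrightarrow> \<tau> (\<sigma> k) = \<sigma> (flip k)"
  unfolding \<tau>_def using index_sigma by simp

lemma tau_pair: "j < L \<Longrightarrow> \<tau> (\<sigma> (2 * j)) = \<sigma> (Suc (2 * j)) \<and> \<tau> (\<sigma> (Suc (2 * j))) = \<sigma> (2 * j)"
  using tau_sigma[of "2 * j"] tau_sigma[of "Suc (2 * j)"] unfolding flip_def by auto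

lemma pairing_on_tau: "pairing_on I \<tau>"
  unfolding pairing_on_def
proof
  fix p assume p: "p \<in> I"
  have k: "index p < 2 * L" using index_less[OF p] .
  have "\<tau> p \<noteq> p"
  proof
    assume "\<tau> p = p"
    then have "\<sigma> (flip (index p)) = \<sigma> (index p)" using sigma_index[OF p] unfolding \<tau>_def by simp
    then show False using inj_onD[OF inj] k flip_props[OF k] by auto
  qed
  then show "\<tau> p \<in> I \<and> \<tau> p \<noteq> p \<and> \<tau> (\<tau> p) = p"
    unfolding \<tau>_def using sigma_in index_sigma flip_props[OF k] sigma_index[OF p] by simp
qed

lemma pair_of_index:
  assumes "p \<in> I"
  defines "j \<equiv> index p div 2"
  shows "j < L" "{\<sigma> (2 * j), \<sigma> (Suc (2 * j))} = {p, \<tau> p}"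
proof -
  show "j < L" using index_less[OF assms(1)] unfolding j_def by simp
  have "index p = 2 * j \<or> index p = Suc (2 * j)" unfolding j_def by presburger
  then show "{\<sigma> (2 * j), \<sigma> (Suc (2 * j))} = {p, \<tau> p}"
    using sigma_index[OF assms(1)] tau_pair[OF \<open>j < L\<close>] by auto
qed

lemma index_rep: "j < L \<Longrightarrow> index (rep j) div 2 = j"
  unfolding rep_def min_def using index_sigma[of "2 * j"] index_sigma[of "Suc (2 * j)"] by auto

lemma bij_betw_rep: "bij_betw rep {..<L} (pair_reps I \<tau>)"
  unfolding bij_betw_def
proof
  show "inj_on rep {..<L}" using index_rep by (metis inj_onI lessThan_iff)
  show "rep ` {..<L} = pair_reps I \<tau>"
  proof
    show "rep ` {..<L} \<subseteq> pair_reps I \<tau>"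
    proof
      fix p assume "p \<in> rep ` {..<L}"
      then obtain j where j: "j < L" "p = rep j" by auto
      have "\<sigma> (2 * j) \<noteq> \<sigma> (Suc (2 * j))" using inj_onD[OF inj, of "2 * j" "Suc (2 * j)"] j by auto
      then show "p \<in> pair_reps I \<tau>" using j tau_pair[OF j(1)] sigma_in[of "2 * j"] sigma_in[of "Suc (2 * j)"]
        unfolding pair_reps_def rep_def min_def by auto
    qed
    show "pair_reps I \<tau> \<subseteq> rep ` {..<L}"
    proof
      fix p assume "p \<in> pair_reps I \<tau>"
      then have p: "p \<in> I" "p < \<tau> p" unfolding pair_reps_def by auto
      then have "rep (index p div 2) = p" using pair_of_index[OF p(1)] unfolding rep_def
        by (auto simp: doubleton_eq_iff min_def)
      then show "p \<in> rep ` {..<L}" using pair_of_index(1)[OF p(1)] by (metis image_eqI lessThan_iff)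
    qed
  qed
qed

lemma rep_index: "p \<in> pair_reps I \<tau> \<Longrightarrow> rep (index p div 2) = p"
  using bij_betw_rep index_rep unfolding bij_betw_def by (metis imageE lessThan_iff)

lemma tau_eq_if_flip:
  assumes "\<And>k. k < 2 * L \<Longrightarrow> \<sigma> (flip k) = Q (\<sigma> k)" "p \<in> I"
  shows "\<tau> p = Q p"
  using assms tau_sigma[of "index p"] index_less[of p] sigma_index[of p] by simp

lemma prod_diagonal_pairs:
  fixes M :: "nat \<Rightarrow> bool \<Rightarrow> bool \<Rightarrow> complex"
  assumes diag: "\<And>j a b. j < L \<Longrightarrow> a \<noteq> b \<Longrightarrow> M j a b = 0"
  shows "(\<Prod>j<L. M j (y (\<sigma> (2 * j))) (y (\<sigma> (Suc (2 * j))))) =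
    (if pair_const I \<tau> y then (\<Prod>p\<in>pair_reps I \<tau>. M (index p div 2) (y p) (y p)) else 0)"
proof (cases "pair_const I \<tau> y")
  case False
  then obtain p where p: "p \<in> I" "y p \<noteq> y (\<tau> p)" unfolding pair_const_def by blast
  define j where "j = index p div 2"
  have "j < L" "y (\<sigma> (2 * j)) \<noteq> y (\<sigma> (Suc (2 * j)))"
    using pair_of_index[OF p(1)] p(2) unfolding j_def by (auto simp: doubleton_eq_iff)
  then have "M j (y (\<sigma> (2 * j))) (y (\<sigma> (Suc (2 * j)))) = 0" using diag by blast
  then show ?thesis using False \<open>j < L\<close> by (auto intro: prod_zero)
next
  case True
  have y_rep: "y (rep j) = y (\<sigma> (2 * j))" "y (\<sigma> (Suc (2 * j))) = y (\<sigma> (2 * j))" if "j < L" for j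
  proof -
    have "y (\<sigma> (2 * j)) = y (\<tau> (\<sigma> (2 * j)))" using pair_constD[OF True sigma_in] that by simp
    then show "y (\<sigma> (Suc (2 * j))) = y (\<sigma> (2 * j))" using tau_pair[OF that] by simp
    then show "y (rep j) = y (\<sigma> (2 * j))" unfolding rep_def min_def by auto
  qed
  have "(\<Prod>p\<in>pair_reps I \<tau>. M (index p div 2) (y p) (y p))
      = (\<Prod>j<L. M (index (rep j) div 2) (y (rep j)) (y (rep j)))"
    using prod.reindex_bij_betw[OF bij_betw_rep, of "\<lambda>p. M (index p div 2) (y p) (y p)"] by simp
  also have "\<dots> = (\<Prod>j<L. M j (y (\<sigma> (2 * j))) (y (\<sigma> (Suc (2 * j)))))"
    by (rule prod.cong) (auto simp: index_rep y_rep)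
  finally show ?thesis using True by simp
qed

end

lemma enumeration_of_pairing:
  assumes Q: "pairing_on {..<2 * n} Q"
  obtains \<pi> where "bij_betw \<pi> {..<2 * n} {..<2 * n}" "\<And>k. k < 2 * n \<Longrightarrow> \<pi> (flip k) = Q (\<pi> k)"
proof -
  define A where "A = pair_reps {..<2 * n} Q"
  have card_A: "card A = n" using card_pair_reps[OF Q] unfolding A_def by simp
  have A: "t < 2 * n \<and> Q t < 2 * n \<and> Q (Q t) = t" if "t \<in> A" for t
    using that pairing_onD[OF Q, of t] unfolding A_def pair_reps_def by auto
  define as where "as = sorted_list_of_set A"
  have as: "set as = A" "length as = n" "distinct as"
    unfolding as_def using card_A by (auto simp: A_def pair_reps_def)
  define \<pi> where "\<pi> k = (if even k then as ! (k div 2) else Q (as ! (k div 2)))" for k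
  have flip: "\<pi> (flip k) = Q (\<pi> k)" if "k < 2 * n" for k
  proof -
    have "k div 2 < n" using that by simp
    then have "Q (Q (as ! (k div 2))) = as ! (k div 2)" using A as by auto
    then show ?thesis using flip_props(4)[OF that] unfolding \<pi>_def flip_def by (auto elim: oddE)
  qed
  have as_A: "as ! j \<in> A" if "j < n" for j using as that by auto
  have "\<pi> ` {..<2 * n} = {..<2 * n}"
  proof
    show "\<pi> ` {..<2 * n} \<subseteq> {..<2 * n}"
    proof
      fix p assume "p \<in> \<pi> ` {..<2 * n}"
      then obtain k where k: "k < 2 * n" "p = \<pi> k" by auto
      then have "as ! (k div 2) \<in> A" using as_A by simp
      then show "p \<in> {..<2 * n}" using A k unfolding \<pi>_def by auto
    qed
    show "{..<2 * n} \<subseteq> \<pi> ` {..<2 * n}"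
    proof
      fix p assume p: "p \<in> {..<2 * n}"
      have "p \<in> A \<or> Q p \<in> A" using pairing_onD[OF Q p] p unfolding A_def pair_reps_def by auto
      then obtain t where t: "t \<in> A" "p = t \<or> p = Q t" using pairing_onD[OF Q p] by auto
      then obtain j where j: "j < n" "as ! j = t" using as by (metis in_set_conv_nth)
      then have "\<pi> (2 * j) = t" "\<pi> (Suc (2 * j)) = Q t" "2 * j < 2 * n" "Suc (2 * j) < 2 * n"
        unfolding \<pi>_def by simp_all
      then show "p \<in> \<pi> ` {..<2 * n}" using t(2) by (metis image_eqI lessThan_iff)
    qed
  qed
  then have "bij_betw \<pi> {..<2 * n} {..<2 * n}"
    by (simp add: bij_betw_def eq_card_imp_inj_on)
  then show ?thesis using that flip by blast
qed

section \<open>The contraction gadget\<close>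

text \<open>Vertex \<open>0\<close> carries \<open>F\<close> and vertex \<open>1\<close> the binary function of \<open>M\<close>; the ports \<open>(0, i)\<close> and
  \<open>(0, j)\<close> are joined to the two ports of vertex \<open>1\<close>, all other ports of \<open>F\<close> dangle in
  increasing order.\<close>
definition contract_edges :: "nat \<Rightarrow> nat \<Rightarrow> nat \<times> nat \<Rightarrow> nat \<times> nat" where
  "contract_edges i j q = (if q = (0, i) then (1, 0) else if q = (0, j) then (1, 1) else
     if q = (1, 0) then (0, i) else if q = (1, 1) then (0, j) else q)"

definition contract_gadget :: "nat \<Rightarrow> (bool list \<Rightarrow> complex) \<Rightarrow> mat2 \<Rightarrow> nat \<Rightarrow> nat \<Rightarrow> gadget" where
  "contract_gadget N F M i j = \<lparr>gfs = [(N, F), mat_sig M],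
     gdang = map (Pair 0) (filter (\<lambda>p. p \<noteq> i \<and> p \<noteq> j) [0..<N]),
     gpair = contract_edges i j\<rparr>"

lemma ports_contract_gadget: "ports (contract_gadget N F M i j) = Pair 0 ` {..<N} \<union> {(1, 0), (1, 1)}"
proof -
  have "(a, b) \<in> ports (contract_gadget N F M i j) \<longleftrightarrow> (a = 0 \<and> b < N) \<or> (a = 1 \<and> b < 2)" for a b
  proof (cases a)
    case 0 then show ?thesis unfolding ports_def contract_gadget_def by simp
  next
    case (Suc m) then show ?thesis unfolding ports_def contract_gadget_def mat_sig_def by (cases m) auto
  qed
  then show ?thesis by (auto simp: less_2_cases_iff)
qed

definition contract_assignment :: "nat \<Rightarrow> nat \<Rightarrow> nat \<Rightarrow> (nat \<Rightarrow> bool) \<Rightarrow> bool \<times> bool \<Rightarrow> nat \<times> nat \<Rightarrow> bool" where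
  "contract_assignment N i j y ab q = (if q \<in> Pair 0 ` {..<N} \<union> {(1, 0), (1, 1)} then
     (if fst q = 0 then (y(i := fst ab, j := snd ab)) (snd q) else if snd q = 0 then fst ab else snd ab)
     else undefined)"

lemma contract_gadget_assignments:
  fixes F :: "bool list \<Rightarrow> complex" and M :: mat2
  assumes ij: "i < N" "j < N" "i \<noteq> j"
  defines "G \<equiv> contract_gadget N F M i j" and "e \<equiv> filter (\<lambda>p. p \<noteq> i \<and> p \<noteq> j) [0..<N]"
  shows "{\<sigma> \<in> ports G \<rightarrow>\<^sub>E (UNIV :: bool set).
      (\<forall>t < length (gdang G). \<sigma> (gdang G ! t) = map y e ! t) \<and>
      (\<forall>q \<in> ports G - set (gdang G). \<sigma> q = \<sigma> (gpair G q))}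
    = range (contract_assignment N i j y)" (is "?S = _")
proof -
  have P: "ports G = Pair 0 ` {..<N} \<union> {(1, 0), (1, 1)}" unfolding G_def by (rule ports_contract_gadget)
  have se: "set e = {..<N} - {i, j}" unfolding e_def by auto
  have dang: "gdang G = map (Pair 0) e" and pair: "gpair G = contract_edges i j"
    unfolding G_def contract_gadget_def e_def by simp_all
  have inner: "ports G - set (gdang G) = {(0, i), (0, j), (1, 0), (1, 1)}"
    using ij by (auto simp: P dang se)
  show ?thesis
  proof
    show "?S \<subseteq> range (contract_assignment N i j y)"
    proof
      fix \<sigma> assume "\<sigma> \<in> ?S"
      then have ext: "\<sigma> \<in> ports G \<rightarrow>\<^sub>E UNIV"
        and dangling: "\<And>t. t < length e \<Longrightarrow> \<sigma> (0, e ! t) = y (e ! t)"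
        and edges: "\<And>q. q \<in> ports G - set (gdang G) \<Longrightarrow> \<sigma> q = \<sigma> (contract_edges i j q)"
        unfolding dang pair by auto
      have "\<sigma> q = contract_assignment N i j y (\<sigma> (0, i), \<sigma> (0, j)) q" for q
      proof (cases "q \<in> ports G")
        case False then show ?thesis using PiE_arb[OF ext False] P unfolding contract_assignment_def by simp
      next
        case True
        then consider k where "k < N" "q = (0, k)" | "q = (1, 0)" | "q = (1, 1)" unfolding P by auto
        then show ?thesis
        proof cases
          case 1
          show ?thesis
          proof (cases "k = i \<or> k = j")
            case False
            then obtain t where "t < length e" "e ! t = k" using se 1 by (metis Diff_iff in_set_conv_nth
                  insertE lessThan_iff singletonD)
            then show ?thesis using dangling False 1 unfolding contract_assignment_def by auto
          qed (use 1 ij in \<open>auto simp: contract_assignment_def\<close>)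
        qed (use edges[of "(1, 0)"] edges[of "(1, 1)"] inner ij in
              \<open>auto simp: contract_assignment_def contract_edges_def\<close>)
      qed
      then show "\<sigma> \<in> range (contract_assignment N i j y)" by blast
    qed
    show "range (contract_assignment N i j y) \<subseteq> ?S"
    proof
      fix \<sigma> assume "\<sigma> \<in> range (contract_assignment N i j y)"
      then obtain ab where \<sigma>: "\<sigma> = contract_assignment N i j y ab" by auto
      have "\<sigma> \<in> ports G \<rightarrow>\<^sub>E UNIV" unfolding \<sigma> P contract_assignment_def by (auto simp: PiE_def extensional_def)
      moreover have "\<sigma> (gdang G ! t) = map y e ! t" if "t < length (gdang G)" for t
      proof -
        have "e ! t \<in> set e" using that dang by simp
        then show ?thesis using that unfolding \<sigma> contract_assignment_def dang se by auto
      qed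
      moreover have "\<sigma> q = \<sigma> (gpair G q)" if "q \<in> ports G - set (gdang G)" for q
        using that ij unfolding inner \<sigma> contract_assignment_def pair contract_edges_def by auto
      ultimately show "\<sigma> \<in> ?S" by blast
    qed
  qed
qed

lemma sum_UNIV_bool_pair:
  "(\<Sum>ab\<in>(UNIV :: (bool \<times> bool) set). (f ab :: 'a::comm_monoid_add))
    = f (False, False) + f (False, True) + f (True, False) + f (True, True)"
proof -
  have "(\<Sum>ab\<in>(UNIV :: (bool \<times> bool) set). f ab) = (\<Sum>a\<in>UNIV. \<Sum>b\<in>UNIV. f (a, b))"
    by (simp add: sum.cartesian_product)
  then show ?thesis unfolding UNIV_bool by (simp add: add.assoc)
qed

lemma gval_contract_gadget:
  assumes ij: "i < N" "j < N" "i \<noteq> j" and M: "is_diagonal M"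
  shows "gval (contract_gadget N F M i j) (map y (filter (\<lambda>p. p \<noteq> i \<and> p \<noteq> j) [0..<N]))
    = contract (\<lambda>y. F (map y [0..<N])) (\<lambda>a. M a a) i j y"
proof -
  let ?G = "contract_gadget N F M i j"
  have inj: "inj (contract_assignment N i j y)"
  proof (rule injI)
    fix ab cd assume "contract_assignment N i j y ab = contract_assignment N i j y cd"
    then have "contract_assignment N i j y ab q = contract_assignment N i j y cd q" for q by simp
    from this[of "(1, 0)"] this[of "(1, 1)"] show "ab = cd"
      unfolding contract_assignment_def by (auto simp: prod_eq_iff)
  qed
  have vertices: "(\<Prod>v < length (gfs ?G). snd (gfs ?G ! v)
        (map (\<lambda>k. contract_assignment N i j y ab (v, k)) [0..<fst (gfs ?G ! v)]))
      = F (map (y(i := fst ab, j := snd ab)) [0..<N]) * M (fst ab) (snd ab)" for ab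
  proof -
    have F_arg: "map (\<lambda>k. contract_assignment N i j y ab (0, k)) [0..<N] = map (y(i := fst ab, j := snd ab)) [0..<N]"
      unfolding contract_assignment_def by auto
    have M_arg: "contract_assignment N i j y ab (1, 0) = fst ab" "contract_assignment N i j y ab (1, 1) = snd ab"
      unfolding contract_assignment_def by auto
    have "(\<Prod>v < length (gfs ?G). snd (gfs ?G ! v)
        (map (\<lambda>k. contract_assignment N i j y ab (v, k)) [0..<fst (gfs ?G ! v)]))
      = F (map (\<lambda>k. contract_assignment N i j y ab (0, k)) [0..<N])
        * M (contract_assignment N i j y ab (1, 0)) (contract_assignment N i j y ab (1, 1))"
      by (simp add: contract_gadget_def mat_sig_def numeral_2_eq_2 lessThan_Suc)
    then show ?thesis by (simp only: F_arg M_arg)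
  qed
  have "gval ?G (map y (filter (\<lambda>p. p \<noteq> i \<and> p \<noteq> j) [0..<N]))
      = (\<Sum>ab\<in>UNIV. F (map (y(i := fst ab, j := snd ab)) [0..<N]) * M (fst ab) (snd ab))"
    unfolding gval_def contract_gadget_assignments[OF ij] by (simp add: sum.reindex[OF inj] vertices)
  also have "\<dots> = contract (\<lambda>y. F (map y [0..<N])) (\<lambda>a. M a a) i j y"
    using M unfolding sum_UNIV_bool_pair contract_def dot_def is_diagonal_def by (simp add: algebra_simps)
  finally show ?thesis .
qed

section \<open>Paired products and \<open>\<lambda>\<langle>B\<rangle>\<close>\<close>

abbreviation mdiag :: "mat2 \<Rightarrow> bool \<Rightarrow> complex" where
  "mdiag M \<equiv> \<lambda>a. M a a"

lemma is_diagonal_off: "is_diagonal M \<Longrightarrow> a \<noteq> b \<Longrightarrow> M a b = 0"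
  unfolding is_diagonal_def by (cases a; cases b) auto

lemma is_diagonal_invertible_nonzero: "is_diagonal M \<Longrightarrow> is_invertible M \<Longrightarrow> M a a \<noteq> 0"
  unfolding is_diagonal_def is_invertible_def by (cases a) auto

lemma det2_mdiag_if_lin_indep2:
  assumes "is_diagonal M1" "is_diagonal M2" "is_invertible M2" "lin_indep2 M1 M2"
  shows "det2 (mdiag M1) (mdiag M2) \<noteq> 0"
proof
  assume "det2 (mdiag M1) (mdiag M2) = 0"
  then have "M2 False False * M1 u v + (- M1 False False) * M2 u v = 0" for u v
    using assms(1,2) unfolding is_diagonal_def det2_def by (cases u; cases v) (auto simp: algebra_simps)
  then have "M2 False False = 0" using assms(4) unfolding lin_indep2_def by blast
  then show False using is_diagonal_invertible_nonzero[OF assms(2,3), of False] by simp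
qed

lemma paired_product_if_in_lambda_span:
  assumes B: "\<forall>M\<in>B. is_diagonal M" "mone \<in> B"
    and g: "in_lambda_span B (length e) g" and e: "distinct e" "set e = I"
  shows "paired_product (mdiag ` B) I (\<lambda>y. g (map y e))"
proof -
  define L where "L = length e div 2"
  obtain c \<pi> Ms where len: "length e = 2 * L" and \<pi>: "bij_betw \<pi> {..<2 * L} {..<2 * L}"
    and Ms: "length Ms = L" "set Ms \<subseteq> B"
    and g_eq: "\<And>x. length x = 2 * L \<Longrightarrow> g x = c * (\<Prod>j<L. (Ms ! j) (x ! \<pi> (2 * j)) (x ! \<pi> (2 * j + 1)))"
    using g unfolding in_lambda_span_def L_def by auto
  define \<sigma> where "\<sigma> k = e ! \<pi> k" for k
  have "bij_betw ((!) e) {..<2 * L} I" using bij_betw_nth[OF e(1) _ e(2)[symmetric]] len by simp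
  then interpret enumerated_pairing \<sigma> L I
    using bij_betw_trans[OF \<pi>] unfolding \<sigma>_def by unfold_locales (simp add: comp_def)
  have Ms_B: "Ms ! j \<in> B" if "j < L" for j using Ms that by auto
  have g_paired: "g (map y e) = (if pair_const I \<tau> y
      then c * (\<Prod>p\<in>pair_reps I \<tau>. mdiag (Ms ! (index p div 2)) (y p)) else 0)" for y
  proof -
    have "\<pi> k < length e" if "k < 2 * L" for k using bij_betwE[OF \<pi>] that len by auto
    then have "g (map y e) = c * (\<Prod>j<L. (Ms ! j) (y (\<sigma> (2 * j))) (y (\<sigma> (Suc (2 * j)))))"
      using g_eq[of "map y e"] len unfolding \<sigma>_def by (auto intro!: prod.cong)
    also have "(\<Prod>j<L. (Ms ! j) (y (\<sigma> (2 * j))) (y (\<sigma> (Suc (2 * j))))) = (if pair_const I \<tau> y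
        then (\<Prod>p\<in>pair_reps I \<tau>. (Ms ! (index p div 2)) (y p) (y p)) else 0)"
      by (rule prod_diagonal_pairs) (use Ms_B B is_diagonal_off in blast)
    finally show ?thesis by simp
  qed
  define \<phi> where "\<phi> p = mdiag (if p \<in> I then Ms ! (index p div 2) else mone)" for p
  have "\<phi> p \<in> mdiag ` B" for p
  proof (cases "p \<in> I")
    case True
    then have "index p div 2 < L" using index_less[OF True] by simp
    then show ?thesis using Ms_B True unfolding \<phi>_def by (auto intro!: imageI)
  next
    case False
    then show ?thesis using B(2) unfolding \<phi>_def by (auto intro!: imageI)
  qed
  moreover have "(\<Prod>p\<in>pair_reps I \<tau>. \<phi> p (y p)) = (\<Prod>p\<in>pair_reps I \<tau>. mdiag (Ms ! (index p div 2)) (y p))" for y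
    by (rule prod.cong) (auto simp: \<phi>_def pair_reps_def)
  ultimately show ?thesis unfolding paired_product_def paired_form_def using pairing_on_tau g_paired
    by (intro exI[of _ \<tau>] conjI exI[of _ c] exI[of _ \<phi>]) simp_all
qed

lemma wf_contract_gadget:
  assumes ij: "i < N" "j < N" "i \<noteq> j" and M: "M \<in> B"
  shows "wf_gadget ({(N, F)} \<union> mat_sig ` B) (contract_gadget N F M i j)"
proof -
  let ?G = "contract_gadget N F M i j"
  define e where "e = filter (\<lambda>p. p \<noteq> i \<and> p \<noteq> j) [0..<N]"
  have dang: "gdang ?G = map (Pair 0) e" unfolding contract_gadget_def e_def by simp
  have inner: "ports ?G - set (gdang ?G) = {(0, i), (0, j), (1, 0), (1, 1)}"
    using ij by (auto simp: ports_contract_gadget dang e_def)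
  show ?thesis unfolding wf_gadget_def
  proof (intro conjI)
    show "set (gfs ?G) \<subseteq> {(N, F)} \<union> mat_sig ` B" using M unfolding contract_gadget_def by auto
    show "distinct (gdang ?G)" unfolding dang e_def by (simp add: distinct_map inj_on_def)
    show "set (gdang ?G) \<subseteq> ports ?G" unfolding dang ports_contract_gadget e_def by auto
    show "\<forall>q\<in>ports ?G - set (gdang ?G).
        gpair ?G q \<in> ports ?G - set (gdang ?G) \<and> gpair ?G q \<noteq> q \<and> gpair ?G (gpair ?G q) = q"
      unfolding inner using ij by (auto simp: contract_gadget_def contract_edges_def)
  qed
qed

lemma contraction_paired_product:
  assumes closure: "\<forall>k f. k < N \<longrightarrow> realizable ({(N, F)} \<union> mat_sig ` B) k f \<longrightarrow> in_lambda_span B k f"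
    and B: "\<forall>M\<in>B. is_diagonal M" "mone \<in> B"
    and ij: "i < N" "j < N" "i \<noteq> j" and M: "M \<in> B"
  shows "paired_product (mdiag ` B) ({..<N} - {i, j}) (contract (\<lambda>y. F (map y [0..<N])) (mdiag M) i j)"
proof -
  define e where "e = filter (\<lambda>p. p \<noteq> i \<and> p \<noteq> j) [0..<N]"
  define G where "G = contract_gadget N F M i j"
  have e: "distinct e" "set e = {..<N} - {i, j}" unfolding e_def by auto
  then have "length e = N - 2" using ij by (simp add: distinct_card[symmetric])
  moreover have "length (gdang G) = length e" unfolding G_def contract_gadget_def e_def by simp
  ultimately have "realizable ({(N, F)} \<union> mat_sig ` B) (length e) (gval G)"
    unfolding realizable_def using wf_contract_gadget[OF ij M] unfolding G_def by auto
  then have "in_lambda_span B (length e) (gval G)" using closure \<open>length e = N - 2\<close> ij by auto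
  then have "paired_product (mdiag ` B) ({..<N} - {i, j}) (\<lambda>y. gval G (map y e))"
    using paired_product_if_in_lambda_span[OF B] e by blast
  moreover have "gval G (map y e) = contract (\<lambda>y. F (map y [0..<N])) (mdiag M) i j y" for y
    unfolding G_def e_def using gval_contract_gadget[OF ij] B(1) M by blast
  ultimately show ?thesis by simp
qed

lemma in_lambda_span_if_paired_product:
  assumes B: "\<forall>M\<in>B. is_diagonal M"
    and F: "paired_product (mdiag ` B) {..<2 * n} (\<lambda>y. F (map y [0..<2 * n]))"
  shows "in_lambda_span B (2 * n) F"
proof -
  obtain c Q \<phi> where Q: "pairing_on {..<2 * n} Q" and \<phi>: "\<forall>p. \<phi> p \<in> mdiag ` B"
    and F_eq: "\<And>y. F (map y [0..<2 * n])
      = (if pair_const {..<2 * n} Q y then c * (\<Prod>p\<in>pair_reps {..<2 * n} Q. \<phi> p (y p)) else 0)"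
    using F unfolding paired_product_def paired_form_def by blast
  obtain \<pi> where \<pi>: "bij_betw \<pi> {..<2 * n} {..<2 * n}" and flip: "\<And>k. k < 2 * n \<Longrightarrow> \<pi> (flip k) = Q (\<pi> k)"
    using enumeration_of_pairing[OF Q] by blast
  interpret enumerated_pairing \<pi> n "{..<2 * n}" by unfold_locales (rule \<pi>)
  have "\<tau> p = Q p" if "p < 2 * n" for p using tau_eq_if_flip[OF flip] that by simp
  then have \<tau>: "pair_const {..<2 * n} \<tau> = pair_const {..<2 * n} Q" "pair_reps {..<2 * n} \<tau> = pair_reps {..<2 * n} Q"
    unfolding pair_const_def pair_reps_def by (auto simp: fun_eq_iff)
  define Ms where "Ms = map (\<lambda>j. SOME M. M \<in> B \<and> \<phi> (rep j) = mdiag M) [0..<n]"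
  have Ms: "Ms ! j \<in> B \<and> \<phi> (rep j) = mdiag (Ms ! j)" if "j < n" for j
  proof -
    have "\<exists>M. M \<in> B \<and> \<phi> (rep j) = mdiag M" using \<phi> by blast
    then have "(SOME M. M \<in> B \<and> \<phi> (rep j) = mdiag M) \<in> B \<and>
        \<phi> (rep j) = mdiag (SOME M. M \<in> B \<and> \<phi> (rep j) = mdiag M)"
      by (rule someI_ex)
    then show ?thesis unfolding Ms_def using that by simp
  qed
  have "F x = c * (\<Prod>j<n. (Ms ! j) (x ! \<pi> (2 * j)) (x ! \<pi> (2 * j + 1)))" if x: "length x = 2 * n" for x
  proof -
    define y where "y p = x ! p" for p
    have "(\<Prod>j<n. (Ms ! j) (y (\<pi> (2 * j))) (y (\<pi> (Suc (2 * j))))) = (if pair_const {..<2 * n} \<tau> y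
        then (\<Prod>p\<in>pair_reps {..<2 * n} \<tau>. (Ms ! (index p div 2)) (y p) (y p)) else 0)"
      by (rule prod_diagonal_pairs) (use Ms B is_diagonal_off in blast)
    also have "(\<Prod>p\<in>pair_reps {..<2 * n} \<tau>. (Ms ! (index p div 2)) (y p) (y p))
        = (\<Prod>p\<in>pair_reps {..<2 * n} \<tau>. \<phi> p (y p))"
    proof (rule prod.cong)
      fix p assume p: "p \<in> pair_reps {..<2 * n} \<tau>"
      then have "index p div 2 < n" using index_less unfolding pair_reps_def by fastforce
      then have "\<phi> (rep (index p div 2)) = mdiag (Ms ! (index p div 2))" using Ms by blast
      then have "\<phi> p = mdiag (Ms ! (index p div 2))" unfolding rep_index[OF p] .
      then show "(Ms ! (index p div 2)) (y p) (y p) = \<phi> p (y p)" by simp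
    qed simp
    finally show ?thesis using F_eq[of y] \<tau> x map_nth[of x] unfolding y_def by simp
  qed
  moreover have "length Ms = n" unfolding Ms_def by simp
  moreover then have "set Ms \<subseteq> B" using Ms by (auto simp: in_set_conv_nth)
  ultimately show ?thesis unfolding in_lambda_span_def using \<pi> by (intro conjI exI[of _ c] exI[of _ \<pi>] exI[of _ Ms]) auto
qed

theorem mainTheorem12:
  fixes B :: "mat2 set" and n :: nat and F :: "bool list \<Rightarrow> complex"
  assumes "finite_cyclic_diag_group B"
    and "card B \<ge> 3"
    and "\<exists>M1\<in>B. \<exists>M2\<in>B. \<exists>M3\<in>B. lin_indep2 M1 M2 \<and> lin_indep2 M1 M3 \<and> lin_indep2 M2 M3"
    and "n \<ge> 3"
    and "\<forall>k f. k < 2 * n \<longrightarrow> realizable ({(2 * n, F)} \<union> mat_sig ` B) k f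
                \<longrightarrow> in_lambda_span B k f"
  shows "in_lambda_span B (2 * n) F"
proof -
  have diag: "\<forall>M\<in>B. is_diagonal M" and inv: "\<forall>M\<in>B. is_invertible M" and "mone \<in> B"
    using assms(1) unfolding finite_cyclic_diag_group_def by auto
  obtain M1 M2 M3 where M: "M1 \<in> B" "M2 \<in> B" "M3 \<in> B"
    and "lin_indep2 M1 M2" "lin_indep2 M1 M3" "lin_indep2 M2 M3" using assms(3) by blast
  then have "det2 (mdiag M1) (mdiag M2) \<noteq> 0" "det2 (mdiag M1) (mdiag M3) \<noteq> 0"
    "det2 (mdiag M2) (mdiag M3) \<noteq> 0" using det2_mdiag_if_lin_indep2 diag inv by blast+
  moreover have "(\<lambda>y. F (map y [0..<2 * n])) y = (\<lambda>y. F (map y [0..<2 * n])) y'"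
    if "\<forall>p<2 * n. y p = y' p" for y y' using that by (auto intro!: arg_cong[where f = F])
  moreover have "d a \<noteq> 0" if "d \<in> mdiag ` B" for d a
    using that diag inv is_diagonal_invertible_nonzero by auto
  moreover have "paired_product (mdiag ` B) ({..<2 * n} - {i, j}) (contract (\<lambda>y. F (map y [0..<2 * n])) w i j)"
    if "i < 2 * n" "j < 2 * n" "i \<noteq> j" "w \<in> {mdiag M1, mdiag M2, mdiag M3}" for i j w
    using that contraction_paired_product[OF assms(5) diag \<open>mone \<in> B\<close>] M by blast
  ultimately interpret paired_contractions "2 * n" "\<lambda>y. F (map y [0..<2 * n])" "mdiag ` B"
    "mdiag M1" "mdiag M2" "mdiag M3"
    using assms(4) \<open>mone \<in> B\<close> by unfold_locales auto
  show ?thesis using in_lambda_span_if_paired_product[OF diag F_paired_product] .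
qed

end
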